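(* Let $m=2$ (so $Y=W_2\times W_5$). Let $h=c_0+c_1T$ and $h'=c_0'+c_1'T$ with $c_0,c_1,c_0',c_1'\in\mathbb{R}$. Then $\mu_h=\varphi_h\circ\mu_0$ and $\mu_{h'}=\varphi_{h'}\circ\mu_0$ are equivalent real circle forms if and only if one of the following holds: (i) $c_0=c_0'=c_1=c_1'=0$; (ii) $c_0=c_0'=0$ and $c_1c_1'\neq0$; (iii) $c_1=c_1'=0$ and $c_0c_0'\neq0$; (iv) $c_0c_0'c_1c_1'\neq0$ and $(c_0'/c_0)^3=c_1'/c_1$. In particular there is an infinite family of pairwise inequivalent real circle forms on $Y$.
   Context: For $k\ge1$, $W_k=\mathbb{C}^2$ is the $\mathbb{C}^*$-module with weights $(k,-k)$: $t\cdot(x,y)=(t^kx,t^{-k}y)$. Here $n=5$ and $Y=W_2\times W_5$ with coordinates $(a,b,x,y)$, $t\cdot(a,b,x,y)=(t^2a,t^{-2}b,t^5x,t^{-5}y)$. Let $\sigma(t)=\overline{t}^{-1}$ on $\mathbb{C}^*$. A real circle form on $Y$ is an antiholomorphic involution $\mu$ of $Y$ with $\mu(t\cdot p)=\sigma(t)\cdot\mu(p)$; two such forms $\mu_1,\mu_2$ are equivalent if $\mu_2=\psi\circ\mu_1\circ\psi^{-1}$ for some regular $\mathbb{C}^*$-equivariant automorphism $\psi$ of $Y$. Let $\mu_0(a,b,x,y)=(\overline{b},\overline{a},\overline{y},\overline{x})$, $T=ab$, and for $h\in\mathbb{R}[T]$ let $M_h=\begin{pmatrix}1-Th^2 & a^nh^n\\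 -b^nh^n & \sum_{j=0}^{n-1}(Th^2)^j\end{pmatrix}$ (with $h=h(ab)$), $\varphi_h(a,b,x,y)=(a,b,M_h\binom{x}{y})$. *)

theory Defs
  imports Complex_Main
begin

text \<open>Points of Y = W_2 x W_5 = C^4 with coordinates (a,b,x,y).\<close>
type_synonym pt = "complex \<times> complex \<times> complex \<times> complex"

definition act :: "complex \<Rightarrow> pt \<Rightarrow> pt" where
  "act t p = (case p of (a,b,x,y) \<Rightarrow>
     (t^2 * a, inverse t ^ 2 * b, t^5 * x, inverse t ^ 5 * y))"

definition sigma :: "complex \<Rightarrow> complex" where
  "sigma t = inverse (cnj t)"

definition poly4 :: "(pt \<Rightarrow> complex) \<Rightarrow> bool" where
  "poly4 f \<longleftrightarrow> (\<exists>S :: (nat \<times> nat \<times> nat \<times> nat) set. \<exists>c. finite S \<and>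
     (\<forall>a b x y. f (a,b,x,y) =
        (\<Sum>(i,j,k,l)\<in>S. c (i,j,k,l) * a^i * b^j * x^k * y^l)))"

definition regular_map :: "(pt \<Rightarrow> pt) \<Rightarrow> bool" where
  "regular_map f \<longleftrightarrow> poly4 (\<lambda>p. fst (f p)) \<and> poly4 (\<lambda>p. fst (snd (f p)))
     \<and> poly4 (\<lambda>p. fst (snd (snd (f p)))) \<and> poly4 (\<lambda>p. snd (snd (snd (f p))))"

definition conj_pt :: "pt \<Rightarrow> pt" where
  "conj_pt p = (case p of (a,b,x,y) \<Rightarrow> (cnj a, cnj b, cnj x, cnj y))"

definition antiregular_map :: "(pt \<Rightarrow> pt) \<Rightarrow> bool" where
  "antiregular_map f \<longleftrightarrow> regular_map (conj_pt \<circ> f)"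

definition regular_aut :: "(pt \<Rightarrow> pt) \<Rightarrow> bool" where
  "regular_aut \<psi> \<longleftrightarrow> bij \<psi> \<and> regular_map \<psi> \<and> regular_map (inv \<psi>)"

definition equivariant :: "(pt \<Rightarrow> pt) \<Rightarrow> bool" where
  "equivariant \<psi> \<longleftrightarrow> (\<forall>t p. t \<noteq> 0 \<longrightarrow> \<psi> (act t p) = act t (\<psi> p))"

definition real_circle_form :: "(pt \<Rightarrow> pt) \<Rightarrow> bool" where
  "real_circle_form \<mu> \<longleftrightarrow> antiregular_map \<mu> \<and> \<mu> \<circ> \<mu> = id \<and>
     (\<forall>t p. t \<noteq> 0 \<longrightarrow> \<mu> (act t p) = act (sigma t) (\<mu> p))"

definition equivalent_rcf :: "(pt \<Rightarrow> pt) \<Rightarrow> (pt \<Rightarrow> pt) \<Rightarrow> bool" where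
  "equivalent_rcf \<mu>1 \<mu>2 \<longleftrightarrow> real_circle_form \<mu>1 \<and> real_circle_form \<mu>2 \<and>
     (\<exists>\<psi>. regular_aut \<psi> \<and> equivariant \<psi> \<and> \<mu>2 = \<psi> \<circ> \<mu>1 \<circ> inv \<psi>)"

definition mu0 :: "pt \<Rightarrow> pt" where
  "mu0 p = (case p of (a,b,x,y) \<Rightarrow> (cnj b, cnj a, cnj y, cnj x))"

text \<open>phi_h for n = 5 and h = c0 + c1 T (real coefficients), T = ab.\<close>
definition phi_lin :: "real \<Rightarrow> real \<Rightarrow> pt \<Rightarrow> pt" where
  "phi_lin c0 c1 p = (case p of (a,b,x,y) \<Rightarrow>
     (let T = a * b; h = complex_of_real c0 + complex_of_real c1 * T in
      (a, b, (1 - T * h^2) * x + a^5 * h^5 * y,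
             - (b^5 * h^5) * x + (\<Sum>j<5. (T * h^2)^j) * y)))"

definition mu_lin :: "real \<Rightarrow> real \<Rightarrow> pt \<Rightarrow> pt" where
  "mu_lin c0 c1 = phi_lin c0 c1 \<circ> mu0"

end

theory Submission
  imports Defs "HOL-Computational_Algebra.Fundamental_Theorem_Algebra"
begin

text \<open>
  An equivariant automorphism \<open>\<psi>\<close> with \<open>\<psi> \<circ> \<mu>\<^sub>h = \<mu>\<^sub>h\<^sub>' \<circ> \<psi>\<close> acts on the zero section
  \<open>x = y = 0\<close> by \<open>(a, b) \<mapsto> (\<alpha> a, \<beta> b)\<close> with \<open>\<alpha> = \<beta>\<close> conjugate, and by equivariance its linear part in
  \<open>(x, y)\<close> along the zero section is a polynomial matrix in \<open>T = ab\<close> of constant determinant.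
  Linearizing the conjugacy along real \<open>T\<close> yields a polynomial matrix \<open>Y\<close> with
  \<open>|Y\<^sub>1\<^sub>1|\<^sup>2 - T |Y\<^sub>1\<^sub>2|\<^sup>2\<close> constant; letting \<open>T \<rightarrow> -\<infinity>\<close> forces \<open>Y\<close> to be constant, and its lowest
  coefficients then give \<open>|\<alpha>| h'(|\<alpha>|\<^sup>2 T) = \<plusminus>h(T)\<close>, i.e. \<open>c\<^sub>0' = \<kappa> c\<^sub>0\<close> and \<open>c\<^sub>1' = \<kappa>\<^sup>3 c\<^sub>1\<close>.
  Conversely, every such scaling is realized by a diagonal automorphism.
\<close>

section \<open>Polynomial functions of one complex variable\<close>

definition polyfun :: "(complex \<Rightarrow> complex) \<Rightarrow> bool" where
  "polyfun f \<longleftrightarrow> (\<exists>p. \<forall>z. f z = poly p z)"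

lemma polyfun_const [simp]: "polyfun (\<lambda>z. c)"
  unfolding polyfun_def by (rule exI[of _ "[:c:]"]) simp

lemma polyfun_id [simp]: "polyfun (\<lambda>z. z)"
  unfolding polyfun_def by (rule exI[of _ "[:0,1:]"]) simp

lemma polyfun_add: "polyfun f \<Longrightarrow> polyfun g \<Longrightarrow> polyfun (\<lambda>z. f z + g z)"
  unfolding polyfun_def by (metis poly_add)

lemma polyfun_mult: "polyfun f \<Longrightarrow> polyfun g \<Longrightarrow> polyfun (\<lambda>z. f z * g z)"
  unfolding polyfun_def by (metis poly_mult)

lemma polyfun_diff: "polyfun f \<Longrightarrow> polyfun g \<Longrightarrow> polyfun (\<lambda>z. f z - g z)"
  unfolding polyfun_def by (metis poly_diff)

lemma polyfun_power: "polyfun f \<Longrightarrow> polyfun (\<lambda>z. f z ^ n)"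
  by (induction n) (auto simp: polyfun_mult)

lemma polyfun_sum: "(\<And>s. s \<in> S \<Longrightarrow> polyfun (f s)) \<Longrightarrow> polyfun (\<lambda>z. \<Sum>s\<in>S. f s z)"
  by (induction S rule: infinite_finite_induct) (simp_all add: polyfun_add)

lemma polyfun_compose: "polyfun f \<Longrightarrow> polyfun g \<Longrightarrow> polyfun (\<lambda>z. f (g z))"
  unfolding polyfun_def by (metis poly_pcompose)

lemmas polyfun_intros = polyfun_const polyfun_id polyfun_add polyfun_mult polyfun_diff polyfun_power

lemma polyfun_tendsto_along_reals:
  assumes "polyfun g" shows "((\<lambda>e::real. g (of_real e)) \<longlongrightarrow> g 0) (at 0)"
proof -
  obtain p where "g = poly p" using assms unfolding polyfun_def by blast
  then show ?thesis by (auto intro!: tendsto_eq_intros)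
qed

lemma polyfun_eq_if_eq_on_nonzero_reals:
  assumes "polyfun f" "polyfun g" "\<And>x::real. x \<noteq> 0 \<Longrightarrow> f (of_real x) = g (of_real x)"
  shows "f z = g z"
proof -
  obtain p q where p: "\<And>z. f z = poly p z" and q: "\<And>z. g z = poly q z"
    using assms unfolding polyfun_def by blast
  have "p - q = 0"
  proof (rule ccontr)
    assume ne: "p - q \<noteq> 0"
    have "of_real ` (UNIV - {0::real}) \<subseteq> {z. poly (p - q) z = 0}"
      using assms(3) by (auto simp: p q)
    moreover have "infinite (of_real ` (UNIV - {0::real}) :: complex set)"
      using finite_imageD[OF _ inj_on_subset[OF inj_of_real]] infinite_UNIV_char_0
      by (metis finite_Diff2 finite.emptyI finite_insert subset_UNIV)
    ultimately show False using poly_roots_finite[OF ne] finite_subset by blast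
  qed
  then show ?thesis by (simp add: p q)
qed

lemma polyfun_constant_if_bounded_on_ray:
  assumes "polyfun f" "\<And>x::real. x \<le> -1 \<Longrightarrow> norm (f (of_real x)) \<le> M"
  shows "f z = f 0"
proof -
  obtain p where p: "\<And>z. f z = poly p z" using assms unfolding polyfun_def by blast
  show ?thesis
  proof (cases p)
    case (pCons a q)
    show ?thesis
    proof (cases "q = 0")
      case True then show ?thesis using pCons by (simp add: p)
    next
      case False
      from poly_infinity[OF False, of "M+1" a] obtain r where
        r: "\<And>z. r \<le> norm z \<Longrightarrow> M + 1 \<le> norm (poly (pCons a q) z)" by blast
      define x where "x = - max r 1"
      have "r \<le> norm (of_real x :: complex)" by (simp add: x_def)
      then have "M + 1 \<le> norm (f (of_real x))" using r pCons p by simp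
      with assms(2)[of x] show ?thesis by (simp add: x_def)
    qed
  qed
qed

lemma polyfun_constant_if_nonvanishing:
  assumes "polyfun f" "\<And>z. f z \<noteq> 0" shows "f z = f 0"
proof -
  obtain p where p: "\<And>z. f z = poly p z" using assms(1) unfolding polyfun_def by blast
  have "constant (poly p)"
    using fundamental_theorem_of_algebra[of p] assms(2) p by auto
  then show ?thesis unfolding constant_def p by blast
qed

section \<open>Polynomial functions on \<open>\<complex>\<^sup>4\<close>\<close>

lemma poly4_const: "poly4 (\<lambda>p. c)"
  unfolding poly4_def
  by (rule exI[of _ "{(0,0,0,0)}"], rule exI[of _ "\<lambda>_. c"]) simp

lemma poly4_coord_a: "poly4 (\<lambda>p. fst p)"
  unfolding poly4_def by (rule exI[of _ "{(1,0,0,0)}"], rule exI[of _ "\<lambda>_. 1"]) simp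
lemma poly4_coord_b: "poly4 (\<lambda>p. fst (snd p))"
  unfolding poly4_def by (rule exI[of _ "{(0,1,0,0)}"], rule exI[of _ "\<lambda>_. 1"]) simp
lemma poly4_coord_x: "poly4 (\<lambda>p. fst (snd (snd p)))"
  unfolding poly4_def by (rule exI[of _ "{(0,0,1,0)}"], rule exI[of _ "\<lambda>_. 1"]) simp
lemma poly4_coord_y: "poly4 (\<lambda>p. snd (snd (snd p)))"
  unfolding poly4_def by (rule exI[of _ "{(0,0,0,1)}"], rule exI[of _ "\<lambda>_. 1"]) simp

definition monomial4 :: "nat \<times> nat \<times> nat \<times> nat \<Rightarrow> pt \<Rightarrow> complex" where
  "monomial4 s p = (case s of (i,j,k,l) \<Rightarrow> case p of (a,b,x,y) \<Rightarrow> a^i * b^j * x^k * y^l)"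

lemma poly4_iff_monomial_sum: "poly4 f \<longleftrightarrow> (\<exists>S c. finite S \<and> (\<forall>p. f p = (\<Sum>s\<in>S. c s * monomial4 s p)))"
proof -
  have eq: "(\<Sum>(i,j,k,l)\<in>S. c (i,j,k,l) * a^i * b^j * x^k * y^l) = (\<Sum>s\<in>S. c s * monomial4 s (a,b,x,y))"
    for S c a b x y
    by (rule sum.cong) (auto simp: monomial4_def mult.assoc)
  have "(\<forall>a b x y. f (a,b,x,y) = (\<Sum>s\<in>S. c s * monomial4 s (a,b,x,y))) \<longleftrightarrow> (\<forall>p. f p = (\<Sum>s\<in>S. c s * monomial4 s p))"
    for S c by auto
  then show ?thesis unfolding poly4_def eq by simp
qed

lemma monomial4_add: "monomial4 (i1+i2, j1+j2, k1+k2, l1+l2) p = monomial4 (i1,j1,k1,l1) p * monomial4 (i2,j2,k2,l2) p"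
  by (cases p) (simp add: monomial4_def power_add)

lemma poly4_add:
  assumes "poly4 f" "poly4 g" shows "poly4 (\<lambda>p. f p + g p)"
proof -
  obtain S c where S: "finite S" "\<And>p. f p = (\<Sum>s\<in>S. c s * monomial4 s p)" using assms(1) poly4_iff_monomial_sum by metis
  obtain T d where T: "finite T" "\<And>p. g p = (\<Sum>s\<in>T. d s * monomial4 s p)" using assms(2) poly4_iff_monomial_sum by metis
  define e where "e s = (if s \<in> S then c s else 0) + (if s \<in> T then d s else 0)" for s
  have "f p + g p = (\<Sum>s\<in>S \<union> T. e s * monomial4 s p)" for p
  proof -
    have "(\<Sum>s\<in>S \<union> T. e s * monomial4 s p) = (\<Sum>s\<in>S \<union> T. (if s \<in> S then c s * monomial4 s p else 0))
           + (\<Sum>s\<in>S \<union> T. (if s \<in> T then d s * monomial4 s p else 0))"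
      unfolding e_def by (simp add: sum.distrib distrib_right if_distrib[of "\<lambda>x. x * _"] cong: if_cong)
    also have "\<dots> = f p + g p"
      using S T by (simp add: sum.If_cases Int_absorb1 Int_absorb2)
    finally show ?thesis by simp
  qed
  then show ?thesis unfolding poly4_iff_monomial_sum using S T by blast
qed

lemma poly4_mult:
  assumes "poly4 f" "poly4 g" shows "poly4 (\<lambda>p. f p * g p)"
proof -
  obtain S c where S: "finite S" "\<And>p. f p = (\<Sum>s\<in>S. c s * monomial4 s p)" using assms(1) poly4_iff_monomial_sum by metis
  obtain T d where T: "finite T" "\<And>p. g p = (\<Sum>s\<in>T. d s * monomial4 s p)" using assms(2) poly4_iff_monomial_sum by metis
  define pl where "pl = (\<lambda>(s::nat\<times>nat\<times>nat\<times>nat, t::nat\<times>nat\<times>nat\<times>nat).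
     case s of (i1,j1,k1,l1) \<Rightarrow> case t of (i2,j2,k2,l2) \<Rightarrow> (i1+i2, j1+j2, k1+k2, l1+l2))"
  have mpl: "monomial4 (pl st) p = monomial4 (fst st) p * monomial4 (snd st) p" for st p
    by (cases st) (auto simp: pl_def monomial4_add split: prod.splits)
  define U where "U = pl ` (S \<times> T)"
  define e where "e u = (\<Sum>st\<in>{st \<in> S \<times> T. pl st = u}. c (fst st) * d (snd st))" for u
  have fU: "finite U" using S T by (simp add: U_def)
  have "f p * g p = (\<Sum>u\<in>U. e u * monomial4 u p)" for p
  proof -
    have "f p * g p = (\<Sum>s\<in>S. \<Sum>t\<in>T. (c s * monomial4 s p) * (d t * monomial4 t p))"
      by (simp add: S T sum_product)
    also have "\<dots> = (\<Sum>st\<in>S \<times> T. (c (fst st) * monomial4 (fst st) p) * (d (snd st) * monomial4 (snd st) p))"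
      by (subst sum.cartesian_product) (simp add: case_prod_beta)
    also have "\<dots> = (\<Sum>st\<in>S \<times> T. c (fst st) * d (snd st) * monomial4 (pl st) p)"
      by (rule sum.cong) (simp_all add: mpl)
    finally have "f p * g p = (\<Sum>st\<in>S \<times> T. c (fst st) * d (snd st) * monomial4 (pl st) p)" .
    also have "\<dots> = (\<Sum>u\<in>U. \<Sum>st\<in>{st \<in> S \<times> T. pl st = u}. c (fst st) * d (snd st) * monomial4 (pl st) p)"
      using S T by (subst sum.group[symmetric, of "S \<times> T" U pl]) (auto simp: U_def)
    also have "\<dots> = (\<Sum>u\<in>U. e u * monomial4 u p)"
      unfolding e_def by (rule sum.cong) (auto simp: sum_distrib_right intro!: sum.cong)
    finally show ?thesis .
  qed
  then show ?thesis unfolding poly4_iff_monomial_sum using fU by blast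
qed

lemma poly4_diff: "poly4 f \<Longrightarrow> poly4 g \<Longrightarrow> poly4 (\<lambda>p. f p - g p)"
  using poly4_add[OF _ poly4_mult[OF poly4_const[of "-1"]], of f g] by simp

lemma poly4_power: "poly4 f \<Longrightarrow> poly4 (\<lambda>p. f p ^ n)"
proof (induction n)
  case 0 then show ?case using poly4_const[of 1] by simp
next
  case (Suc n) then show ?case using poly4_mult[OF Suc(2) Suc(1)[OF Suc(2)]] by simp
qed

lemmas poly4_intros = poly4_const poly4_coord_a poly4_coord_b poly4_coord_x poly4_coord_y
  poly4_add poly4_mult poly4_diff poly4_power

lemma polyfun_poly4_along_curve:
  assumes "poly4 F" "polyfun A" "polyfun B" "polyfun X" "polyfun Y"
  shows "polyfun (\<lambda>z. F (A z, B z, X z, Y z))"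
proof -
  obtain S c where S: "finite S" "\<And>p. F p = (\<Sum>s\<in>S. c s * monomial4 s p)" using assms(1) poly4_iff_monomial_sum by metis
  have "polyfun (\<lambda>z. \<Sum>s\<in>S. c s * monomial4 s (A z, B z, X z, Y z))"
    using assms(2-5) by (intro polyfun_sum) (auto simp: monomial4_def split: prod.splits intro!: polyfun_mult polyfun_power)
  then show ?thesis by (simp add: S)
qed

section \<open>Linear parts along the zero section\<close>

text \<open>For \<open>F\<close> vanishing on the zero section \<open>x = y = 0\<close>, these are the coefficients of \<open>x\<close>
  and \<open>y\<close> in the linear part of \<open>F\<close> at \<open>(a, b, 0, 0)\<close>.\<close>

definition partial_x :: "(pt \<Rightarrow> complex) \<Rightarrow> complex \<Rightarrow> complex \<Rightarrow> complex" where
  "partial_x F a b = Lim (at (0::real)) (\<lambda>e. F (a, b, of_real e, 0) / of_real e)"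

definition partial_y :: "(pt \<Rightarrow> complex) \<Rightarrow> complex \<Rightarrow> complex \<Rightarrow> complex" where
  "partial_y F a b = Lim (at (0::real)) (\<lambda>e. F (a, b, 0, of_real e) / of_real e)"

definition deg_x :: "nat \<times> nat \<times> nat \<times> nat \<Rightarrow> nat" where "deg_x s = fst (snd (snd s))"
definition deg_y :: "nat \<times> nat \<times> nat \<times> nat \<Rightarrow> nat" where "deg_y s = snd (snd (snd s))"

lemma monomial4_split: "monomial4 s (a,b,x,y) = monomial4 s (a,b,1,1) * x^(deg_x s) * y^(deg_y s)"
  by (cases s) (simp add: monomial4_def deg_x_def deg_y_def)

lemma tendsto_of_real_mult_div: "((\<lambda>e::real. of_real e * c / of_real e :: complex) \<longlongrightarrow> c) (at 0)"
proof -
  have ev: "\<forall>\<^sub>F e in at (0::real). (of_real e * c / of_real e :: complex) = c"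
    by (auto simp: eventually_at_filter)
  show ?thesis by (subst tendsto_cong[OF ev]) simp
qed

lemma tendsto_zero_if_tendsto_div:
  assumes "((\<lambda>e. X e / of_real e) \<longlongrightarrow> (x1::complex)) (at (0::real))"
  shows "(X \<longlongrightarrow> 0) (at (0::real))"
proof -
  have "((\<lambda>e. (X e / of_real e) * of_real e) \<longlongrightarrow> x1 * of_real 0) (at (0::real))"
    by (intro tendsto_intros assms)
  moreover have "\<forall>\<^sub>F e in at (0::real). (X e / of_real e) * of_real e = X e"
    by (auto simp: eventually_at_filter)
  ultimately show ?thesis by (simp add: tendsto_cong)
qed

lemma tendsto_power_xy_div:
  assumes X: "((\<lambda>e. X e / of_real e) \<longlongrightarrow> (x1::complex)) (at (0::real))"
    and Y: "((\<lambda>e. Y e / of_real e) \<longlongrightarrow> (y1::complex)) (at (0::real))"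
    and kl: "k \<noteq> 0 \<or> l \<noteq> 0"
  shows "((\<lambda>e. X e ^ k * Y e ^ l / of_real e) \<longlongrightarrow>
           (if k = 1 \<and> l = 0 then x1 else if k = 0 \<and> l = 1 then y1 else 0)) (at (0::real))"
proof -
  have X0: "(X \<longlongrightarrow> 0) (at (0::real))" and Y0: "(Y \<longlongrightarrow> 0) (at (0::real))"
    using X Y by (simp_all add: tendsto_zero_if_tendsto_div)
  show ?thesis
  proof (cases "k \<noteq> 0")
    case True
    have "((\<lambda>e. (X e / of_real e) * (X e ^ (k - 1) * Y e ^ l)) \<longlongrightarrow> x1 * (0 ^ (k - 1) * 0 ^ l)) (at (0::real))"
      by (intro tendsto_intros X X0 Y0)
    moreover have "(\<lambda>e. (X e / of_real e) * (X e ^ (k - 1) * Y e ^ l)) = (\<lambda>e. X e ^ k * Y e ^ l / of_real e)"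
      using True by (auto simp: power_eq_if)
    ultimately show ?thesis using True by (auto simp: power_0_left)
  next
    case False
    then have l: "l \<noteq> 0" "k = 0" using kl by auto
    have "((\<lambda>e. (Y e / of_real e) * Y e ^ (l - 1)) \<longlongrightarrow> y1 * 0 ^ (l - 1)) (at (0::real))"
      by (intro tendsto_intros Y Y0)
    moreover have "(\<lambda>e. (Y e / of_real e) * Y e ^ (l - 1)) = (\<lambda>e. X e ^ k * Y e ^ l / of_real e)"
      using l by (auto simp: power_eq_if)
    ultimately show ?thesis using l by (auto simp: power_0_left)
  qed
qed

definition lin_coeff_x :: "(nat \<times> nat \<times> nat \<times> nat) set \<Rightarrow> (nat \<times> nat \<times> nat \<times> nat \<Rightarrow> complex) \<Rightarrow> complex \<Rightarrow> complex \<Rightarrow> complex" where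
  "lin_coeff_x S c a b = (\<Sum>s\<in>S. if deg_x s = 1 \<and> deg_y s = 0 then c s * monomial4 s (a,b,1,1) else 0)"

definition lin_coeff_y :: "(nat \<times> nat \<times> nat \<times> nat) set \<Rightarrow> (nat \<times> nat \<times> nat \<times> nat \<Rightarrow> complex) \<Rightarrow> complex \<Rightarrow> complex \<Rightarrow> complex" where
  "lin_coeff_y S c a b = (\<Sum>s\<in>S. if deg_x s = 0 \<and> deg_y s = 1 then c s * monomial4 s (a,b,1,1) else 0)"

lemma tendsto_monomial_sum_div:
  assumes S: "finite S" "\<And>p. F p = (\<Sum>s\<in>S. c s * monomial4 s p)"
    and F0: "\<And>a b. F (a,b,0,0) = 0"
    and A: "(A \<longlongrightarrow> a0) (at (0::real))" and B: "(B \<longlongrightarrow> b0) (at (0::real))"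
    and X: "((\<lambda>e. X e / of_real e) \<longlongrightarrow> x1) (at (0::real))"
    and Y: "((\<lambda>e. Y e / of_real e) \<longlongrightarrow> y1) (at (0::real))"
  shows "((\<lambda>e. F (A e, B e, X e, Y e) / of_real e) \<longlongrightarrow>
      lin_coeff_x S c a0 b0 * x1 + lin_coeff_y S c a0 b0 * y1) (at (0::real))"
proof -
  define L where "L s = (if deg_x s = 1 \<and> deg_y s = 0 then x1 else if deg_x s = 0 \<and> deg_y s = 1 then y1 else 0)" for s
  define G where "G a b x y s = (if deg_x s = 0 \<and> deg_y s = 0 then 0 else c s * monomial4 s (a,b,x,y))" for a b x y s
  \<comment> \<open>The constant terms in \<open>x, y\<close> sum up to \<open>F (a, b, 0, 0) = 0\<close>.\<close>
  have F_eq: "F (a,b,x,y) = (\<Sum>s\<in>S. G a b x y s)" for a b x y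
  proof -
    have "F (a,b,x,y) = (\<Sum>s\<in>S. (if deg_x s = 0 \<and> deg_y s = 0 then c s * monomial4 s (a,b,0,0) else 0)
        + G a b x y s)"
      unfolding S(2) G_def by (rule sum.cong) (auto simp: monomial4_split[of _ a b x y] monomial4_split[of _ a b 0 0])
    also have "\<dots> = F (a,b,0,0) + (\<Sum>s\<in>S. G a b x y s)"
      unfolding sum.distrib S(2)
      by (simp, rule sum.cong) (auto simp: monomial4_split[of _ a b 0 0] power_0_left)
    finally show ?thesis using F0 by simp
  qed
  have "((\<lambda>e. G (A e) (B e) (X e) (Y e) s / of_real e) \<longlongrightarrow>
      (if deg_x s = 0 \<and> deg_y s = 0 then 0 else c s * monomial4 s (a0,b0,1,1) * L s)) (at (0::real))" for s
  proof (cases "deg_x s = 0 \<and> deg_y s = 0")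
    case False
    have "((\<lambda>e. monomial4 s (A e, B e, 1, 1)) \<longlongrightarrow> monomial4 s (a0,b0,1,1)) (at (0::real))"
      by (cases s) (auto simp: monomial4_def intro!: tendsto_intros A B)
    moreover have "((\<lambda>e. X e ^ deg_x s * Y e ^ deg_y s / of_real e) \<longlongrightarrow> L s) (at (0::real))"
      using tendsto_power_xy_div[OF X Y] False by (simp add: L_def)
    ultimately have "((\<lambda>e. c s * monomial4 s (A e, B e, 1, 1) * (X e ^ deg_x s * Y e ^ deg_y s / of_real e))
        \<longlongrightarrow> c s * monomial4 s (a0,b0,1,1) * L s) (at (0::real))"
      by (intro tendsto_intros)
    moreover have "(\<lambda>e. G (A e) (B e) (X e) (Y e) s / of_real e) =
        (\<lambda>e. c s * monomial4 s (A e, B e, 1, 1) * (X e ^ deg_x s * Y e ^ deg_y s / of_real e))"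
      unfolding G_def if_not_P[OF False] by (simp add: monomial4_split[of s "A _" "B _" "X _" "Y _"] mult_ac)
    ultimately show ?thesis unfolding if_not_P[OF False] by (simp only:)
  qed (simp add: G_def)
  then have "((\<lambda>e. \<Sum>s\<in>S. G (A e) (B e) (X e) (Y e) s / of_real e) \<longlongrightarrow>
      (\<Sum>s\<in>S. if deg_x s = 0 \<and> deg_y s = 0 then 0 else c s * monomial4 s (a0,b0,1,1) * L s)) (at (0::real))"
    by (intro tendsto_sum)
  moreover have "(\<Sum>s\<in>S. if deg_x s = 0 \<and> deg_y s = 0 then 0 else c s * monomial4 s (a0,b0,1,1) * L s) =
      lin_coeff_x S c a0 b0 * x1 + lin_coeff_y S c a0 b0 * y1"
    unfolding lin_coeff_x_def lin_coeff_y_def sum_distrib_right sum.distrib[symmetric]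
    by (rule sum.cong) (auto simp: L_def)
  ultimately show ?thesis by (simp add: F_eq sum_divide_distrib)
qed

lemma partial_xy_eq_lin_coeff:
  assumes S: "finite S" "\<And>p. F p = (\<Sum>s\<in>S. c s * monomial4 s p)" and F0: "\<And>a b. F (a,b,0,0) = 0"
  shows "partial_x F a b = lin_coeff_x S c a b" "partial_y F a b = lin_coeff_y S c a b"
proof -
  have one: "((\<lambda>e::real. of_real e / of_real e :: complex) \<longlongrightarrow> 1) (at 0)"
    using tendsto_of_real_mult_div[of 1] by (simp only: mult_1_right)
  have zero: "((\<lambda>e::real. 0 / of_real e :: complex) \<longlongrightarrow> 0) (at 0)" by simp
  show "partial_x F a b = lin_coeff_x S c a b"
    unfolding partial_x_def
    using tendsto_monomial_sum_div[OF S F0 tendsto_const tendsto_const one zero, of a b]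
    by (intro tendsto_Lim) simp_all
  show "partial_y F a b = lin_coeff_y S c a b"
    unfolding partial_y_def
    using tendsto_monomial_sum_div[OF S F0 tendsto_const tendsto_const zero one, of a b]
    by (intro tendsto_Lim) simp_all
qed

lemma tendsto_poly4_first_order:
  assumes "poly4 F" "\<And>a b. F (a,b,0,0) = 0"
    and A: "(A \<longlongrightarrow> a0) (at (0::real))" and B: "(B \<longlongrightarrow> b0) (at (0::real))"
    and X: "((\<lambda>e. X e / of_real e) \<longlongrightarrow> x1) (at (0::real))"
    and Y: "((\<lambda>e. Y e / of_real e) \<longlongrightarrow> y1) (at (0::real))"
  shows "((\<lambda>e. F (A e, B e, X e, Y e) / of_real e) \<longlongrightarrow> partial_x F a0 b0 * x1 + partial_y F a0 b0 * y1) (at (0::real))"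
proof -
  obtain S c where S: "finite S" "\<And>p. F p = (\<Sum>s\<in>S. c s * monomial4 s p)"
    using assms(1) poly4_iff_monomial_sum by metis
  show ?thesis
    using tendsto_monomial_sum_div[OF S assms(2) A B X Y] partial_xy_eq_lin_coeff[OF S assms(2)] by simp
qed

lemma polyfun_partial_xy:
  assumes "poly4 F" and F0: "\<And>a b. F (a,b,0,0) = 0" and "polyfun A" "polyfun B"
  shows "polyfun (\<lambda>z. partial_x F (A z) (B z))" "polyfun (\<lambda>z. partial_y F (A z) (B z))"
proof -
  obtain S c where S: "finite S" "\<And>p. F p = (\<Sum>s\<in>S. c s * monomial4 s p)"
    using assms(1) poly4_iff_monomial_sum by metis
  have "polyfun (\<lambda>z. c s * monomial4 s (A z, B z, 1, 1))" for s
    using assms(3,4) by (cases s) (auto simp: monomial4_def intro!: polyfun_intros)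
  moreover have "polyfun g \<Longrightarrow> polyfun (\<lambda>z. if P then g z else 0)" for P g
    by (cases P) simp_all
  ultimately show "polyfun (\<lambda>z. partial_x F (A z) (B z))" "polyfun (\<lambda>z. partial_y F (A z) (B z))"
    unfolding partial_xy_eq_lin_coeff[OF S F0] lin_coeff_x_def lin_coeff_y_def
    by (simp_all add: polyfun_sum)
qed

lemma tendsto_poly4_line:
  assumes "poly4 F" "\<And>a b. F (a,b,0,0) = 0"
  shows "((\<lambda>e. F (a, b, of_real e * x, of_real e * y) / of_real e) \<longlongrightarrow>
           partial_x F a b * x + partial_y F a b * y) (at (0::real))"
  by (rule tendsto_poly4_first_order[OF assms tendsto_const tendsto_const
        tendsto_of_real_mult_div tendsto_of_real_mult_div])

lemma partial_xy_weight:
  assumes P: "poly4 F" and F0: "\<And>a b. F (a,b,0,0) = 0"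
    and W: "\<And>p. F (act t p) = w * F p"
  shows "partial_x F (t^2 * a) (inverse t ^ 2 * b) * t^5 = w * partial_x F a b"
    and "partial_y F (t^2 * a) (inverse t ^ 2 * b) * inverse t ^ 5 = w * partial_y F a b"
proof -
  have lin: "partial_x F (t^2 * a) (inverse t ^ 2 * b) * (t^5 * x)
      + partial_y F (t^2 * a) (inverse t ^ 2 * b) * (inverse t ^ 5 * y)
      = w * (partial_x F a b * x + partial_y F a b * y)" for x y
  proof (rule tendsto_unique[OF _ tendsto_poly4_line[OF P F0]])
    have "F (t^2 * a, inverse t ^ 2 * b, of_real e * (t^5 * x), of_real e * (inverse t ^ 5 * y))
        = w * F (a, b, of_real e * x, of_real e * y)" for e
      using W[of "(a, b, of_real e * x, of_real e * y)"] by (simp add: act_def mult_ac)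
    then have "(\<lambda>e. F (t^2 * a, inverse t ^ 2 * b, of_real e * (t^5 * x), of_real e * (inverse t ^ 5 * y))
        / of_real e) = (\<lambda>e. w * (F (a, b, of_real e * x, of_real e * y) / of_real e))"
      by simp
    then show "((\<lambda>e. F (t^2 * a, inverse t ^ 2 * b, of_real e * (t^5 * x), of_real e * (inverse t ^ 5 * y))
        / of_real e) \<longlongrightarrow> w * (partial_x F a b * x + partial_y F a b * y)) (at (0::real))"
      by (simp only:) (intro tendsto_mult_left tendsto_poly4_line[OF P F0])
  qed simp
  from lin[of 1 0] lin[of 0 1]
  show "partial_x F (t^2 * a) (inverse t ^ 2 * b) * t^5 = w * partial_x F a b"
    and "partial_y F (t^2 * a) (inverse t ^ 2 * b) * inverse t ^ 5 = w * partial_y F a b"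
    by simp_all
qed

section \<open>Equivariant regular maps\<close>

definition coord_a :: "(pt \<Rightarrow> pt) \<Rightarrow> pt \<Rightarrow> complex" where "coord_a f p = fst (f p)"
definition coord_b :: "(pt \<Rightarrow> pt) \<Rightarrow> pt \<Rightarrow> complex" where "coord_b f p = fst (snd (f p))"
definition coord_x :: "(pt \<Rightarrow> pt) \<Rightarrow> pt \<Rightarrow> complex" where "coord_x f p = fst (snd (snd (f p)))"
definition coord_y :: "(pt \<Rightarrow> pt) \<Rightarrow> pt \<Rightarrow> complex" where "coord_y f p = snd (snd (snd (f p)))"

lemma pt_eq_coords: "f p = (coord_a f p, coord_b f p, coord_x f p, coord_y f p)"
  by (simp add: coord_a_def coord_b_def coord_x_def coord_y_def)

lemma act_eq: "act t (a,b,x,y) = (t^2 * a, inverse t ^ 2 * b, t^5 * x, inverse t ^ 5 * y)"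
  by (simp add: act_def)

locale equivariant_regular =
  fixes f :: "pt \<Rightarrow> pt"
  assumes equivariant: "equivariant f" and regular: "regular_map f"
begin

lemma poly4_coords: "poly4 (coord_a f)" "poly4 (coord_b f)" "poly4 (coord_x f)" "poly4 (coord_y f)"
  using regular unfolding regular_map_def coord_a_def coord_b_def coord_x_def coord_y_def
  by (auto simp: comp_def)

lemma coords_act:
  assumes "t \<noteq> 0"
  shows "coord_a f (act t p) = t^2 * coord_a f p" "coord_b f (act t p) = inverse t ^ 2 * coord_b f p"
        "coord_x f (act t p) = t^5 * coord_x f p" "coord_y f (act t p) = inverse t ^ 5 * coord_y f p"
  using equivariant assms unfolding equivariant_def
  by (simp_all add: coord_a_def coord_b_def coord_x_def coord_y_def act_def split: prod.splits)

text \<open>\<open>-1\<close> acts trivially on the zero section but by \<open>-1\<close> on \<open>x\<close> and \<open>y\<close>.\<close>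

lemma coord_xy_zero_section: "coord_x f (a,b,0,0) = 0" "coord_y f (a,b,0,0) = 0"
  using coords_act(3,4)[of "-1" "(a,b,0,0)"] by (simp_all add: act_def)

lemma coord_a_zero_section: "coord_a f (a,b,0,0) = a * coord_a f (1, a*b, 0, 0)"
proof (rule polyfun_eq_if_eq_on_nonzero_reals[of "\<lambda>a. coord_a f (a,b,0,0)" "\<lambda>a. a * coord_a f (1, a*b, 0, 0)"])
  fix x :: real assume "x \<noteq> 0"
  define t where "t = csqrt (of_real x)"
  have t2: "t^2 = of_real x" and t0: "t \<noteq> 0" using \<open>x \<noteq> 0\<close> by (auto simp: t_def)
  then have "act t (1, of_real x * b, 0, 0) = (of_real x, b, 0, 0)"
    using \<open>x \<noteq> 0\<close> by (simp add: act_def power2_eq_square field_simps)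
  with coords_act(1)[OF t0, of "(1, of_real x * b, 0, 0)"] t2
  show "coord_a f (of_real x, b, 0, 0) = of_real x * coord_a f (1, of_real x * b, 0, 0)" by simp
qed (auto intro!: polyfun_poly4_along_curve poly4_coords polyfun_intros)

lemma coord_b_zero_section: "coord_b f (a,b,0,0) = b * coord_b f (a*b, 1, 0, 0)"
proof (rule polyfun_eq_if_eq_on_nonzero_reals[of "\<lambda>b. coord_b f (a,b,0,0)" "\<lambda>b. b * coord_b f (a*b, 1, 0, 0)"])
  fix x :: real assume "x \<noteq> 0"
  define t where "t = inverse (csqrt (of_real x))"
  have t2: "inverse t ^ 2 = of_real x" and t0: "t \<noteq> 0" using \<open>x \<noteq> 0\<close> by (auto simp: t_def)
  then have "t^2 = inverse (of_real x)" by (metis inverse_inverse_eq power_inverse)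
  then have "act t (a * of_real x, 1, 0, 0) = (a, of_real x, 0, 0)"
    using t2 t0 \<open>x \<noteq> 0\<close> by (simp add: act_def field_simps)
  with coords_act(2)[OF t0, of "(a * of_real x, 1, 0, 0)"] t2
  show "coord_b f (a, of_real x, 0, 0) = of_real x * coord_b f (a * of_real x, 1, 0, 0)" by simp
qed (auto intro!: polyfun_poly4_along_curve poly4_coords polyfun_intros)

lemma partial_coords_weight:
  assumes "t \<noteq> 0"
  shows "partial_x (coord_x f) (t^2 * a) (inverse t ^ 2 * b) = partial_x (coord_x f) a b"
    and "partial_y (coord_x f) (t^2 * a) (inverse t ^ 2 * b) = t^10 * partial_y (coord_x f) a b"
    and "partial_x (coord_y f) (t^2 * a) (inverse t ^ 2 * b) = inverse t ^ 10 * partial_x (coord_y f) a b"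
    and "partial_y (coord_y f) (t^2 * a) (inverse t ^ 2 * b) = partial_y (coord_y f) a b"
proof -
  note X = partial_xy_weight[OF poly4_coords(3) coord_xy_zero_section(1) coords_act(3)[OF assms], of a b]
  note Y = partial_xy_weight[OF poly4_coords(4) coord_xy_zero_section(2) coords_act(4)[OF assms], of a b]
  have t10: "t^10 = t^5 * t^5" "inverse t ^ 10 = inverse t ^ 5 * inverse t ^ 5"
    by (simp_all flip: power_add)
  show "partial_x (coord_x f) (t^2 * a) (inverse t ^ 2 * b) = partial_x (coord_x f) a b"
    using X(1) assms by simp
  show "partial_y (coord_x f) (t^2 * a) (inverse t ^ 2 * b) = t^10 * partial_y (coord_x f) a b"
    using X(2) assms unfolding t10 by (simp add: field_simps)
  show "partial_x (coord_y f) (t^2 * a) (inverse t ^ 2 * b) = inverse t ^ 10 * partial_x (coord_y f) a b"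
    using Y(1) assms unfolding t10 by (simp add: field_simps)
  show "partial_y (coord_y f) (t^2 * a) (inverse t ^ 2 * b) = partial_y (coord_y f) a b"
    using Y(2) assms by simp
qed

lemma partial_coords_normalize:
  assumes "a \<noteq> 0"
  shows "partial_x (coord_x f) a b = partial_x (coord_x f) 1 (a*b)"
    and "partial_y (coord_x f) a b = a^5 * partial_y (coord_x f) 1 (a*b)"
    and "partial_y (coord_y f) a b = partial_y (coord_y f) 1 (a*b)"
proof -
  define t where "t = csqrt a"
  have t2: "t^2 = a" and t0: "t \<noteq> 0" using assms by (auto simp: t_def)
  have b: "inverse t ^ 2 * (a * b) = b" using t2 assms by (simp add: power_inverse)
  have t10: "t^10 = a^5" by (simp add: t2[symmetric] flip: power_mult)
  show "partial_x (coord_x f) a b = partial_x (coord_x f) 1 (a*b)"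
    using partial_coords_weight(1)[OF t0, of 1 "a*b"] by (simp only: mult_1_right t2 b)
  show "partial_y (coord_x f) a b = a^5 * partial_y (coord_x f) 1 (a*b)"
    using partial_coords_weight(2)[OF t0, of 1 "a*b"] by (simp only: mult_1_right t2 b t10)
  show "partial_y (coord_y f) a b = partial_y (coord_y f) 1 (a*b)"
    using partial_coords_weight(4)[OF t0, of 1 "a*b"] by (simp only: mult_1_right t2 b)
qed

lemma partial_x_coord_y_normalize:
  assumes "b \<noteq> 0"
  shows "partial_x (coord_y f) a b = b^5 * partial_x (coord_y f) (a*b) 1"
proof -
  define t where "t = inverse (csqrt b)"
  have t2: "inverse t ^ 2 = b" and t0: "t \<noteq> 0" using assms by (auto simp: t_def)
  then have "t^2 = inverse b" by (metis inverse_inverse_eq power_inverse)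
  then have a: "t^2 * (a * b) = a" using assms by simp
  have t10: "inverse t ^ 10 = b^5" by (simp add: t2[symmetric] flip: power_mult)
  show ?thesis
    using partial_coords_weight(3)[OF t0, of "a*b" 1] by (simp only: mult_1_right t2 a t10)
qed

end

section \<open>The real circle forms \<open>\<mu>\<^sub>h\<close>\<close>

definition geom5 :: "complex \<Rightarrow> complex" where "geom5 u = (\<Sum>j<5. u^j)"

lemma geom5_eq: "geom5 u = 1 + u + u^2 + u^3 + u^4"
  by (simp add: geom5_def numeral_eq_Suc lessThan_Suc)

lemma mu_lin_eq:
  "mu_lin c0 c1 (a,b,x,y) =
    (let T = cnj b * cnj a; h = of_real c0 + of_real c1 * T in
    (cnj b, cnj a, (1 - T * h^2) * cnj y + cnj b ^ 5 * h^5 * cnj x,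
     - (cnj a ^ 5 * h^5) * cnj y + geom5 (T * h^2) * cnj x))"
  by (simp add: mu_lin_def phi_lin_def mu0_def Let_def geom5_def)

lemma cnj_geom5: "cnj (geom5 z) = geom5 (cnj z)"
  by (simp add: geom5_eq)

text \<open>\<open>M\<^sub>h\<close> has determinant \<open>(1 - u)(1 + u + \<dots> + u\<^sup>4) + u\<^sup>5 = 1\<close> (with \<open>u = T h\<^sup>2\<close>), so swapping the
  roles of \<open>a\<close> and \<open>b\<close> inverts it; this is why \<open>\<mu>\<^sub>h\<close> is an involution.\<close>

lemma M_matrix_inverse_x:
  fixes a b x y H :: complex
  shows "(1 - a*b*H^2) * (- (a^5*H^5) * y + geom5 (a*b*H^2) * x) + a^5*H^5*((1 - a*b*H^2)*y + b^5*H^5*x) = x"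
proof -
  define u where "u = a*b*H^2"
  have u5: "a^5*b^5*H^10 = u^5" by (simp add: u_def power_mult_distrib power_mult[symmetric])
  have "(1 - u) * (- (a^5*H^5) * y + (1 + u + u^2 + u^3 + u^4) * x) + a^5*H^5*((1 - u)*y + b^5*H^5*x)
      = ((1 - u) * (1 + u + u^2 + u^3 + u^4) + a^5*b^5*H^10) * x"
    by (simp add: algebra_simps power_add[symmetric])
  also have "\<dots> = x" unfolding u5 by (simp add: algebra_simps eval_nat_numeral)
  finally show ?thesis by (simp add: u_def geom5_eq)
qed

lemma M_matrix_inverse_y:
  fixes a b x y H :: complex
  shows "- (b^5*H^5) * (- (a^5*H^5) * y + geom5 (a*b*H^2) * x) + geom5 (a*b*H^2) * ((1 - a*b*H^2)*y + b^5*H^5*x) = y"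
proof -
  define u where "u = a*b*H^2"
  have u5: "a^5*b^5*H^10 = u^5" by (simp add: u_def power_mult_distrib power_mult[symmetric])
  have "- (b^5*H^5) * (- (a^5*H^5) * y + (1 + u + u^2 + u^3 + u^4) * x) + (1 + u + u^2 + u^3 + u^4) * ((1 - u)*y + b^5*H^5*x)
      = ((1 - u) * (1 + u + u^2 + u^3 + u^4) + a^5*b^5*H^10) * y"
    by (simp add: algebra_simps power_add[symmetric])
  also have "\<dots> = y" unfolding u5 by (simp add: algebra_simps eval_nat_numeral)
  finally show ?thesis by (simp add: u_def geom5_eq)
qed

lemma mu_lin_eq_cnj: "mu_lin c0 c1 (a,b,x,y) =
   (cnj b, cnj a,
    cnj ((1 - (a*b) * (of_real c0 + of_real c1 * (a*b))^2) * y + b^5 * (of_real c0 + of_real c1 * (a*b))^5 * x),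
    cnj (- (a^5 * (of_real c0 + of_real c1 * (a*b))^5) * y + geom5 ((a*b) * (of_real c0 + of_real c1 * (a*b))^2) * x))"
  by (simp add: mu_lin_eq Let_def cnj_geom5 mult.commute)

lemma mu_lin_involution: "mu_lin c0 c1 (mu_lin c0 c1 p) = p"
proof -
  obtain a b x y where p: "p = (a,b,x,y)" by (cases p) auto
  define H where "H = complex_of_real c0 + complex_of_real c1 * (a*b)"
  define M1 where "M1 = (1 - (a*b) * H^2) * y + b^5 * H^5 * x"
  define M2 where "M2 = - (a^5 * H^5) * y + geom5 ((a*b) * H^2) * x"
  have s1: "mu_lin c0 c1 (a,b,x,y) = (cnj b, cnj a, cnj M1, cnj M2)"
    unfolding mu_lin_eq_cnj M1_def M2_def H_def ..
  have HH: "complex_of_real c0 + complex_of_real c1 * (cnj (cnj a) * cnj (cnj b)) = H" by (simp add: H_def)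
  have s2: "mu_lin c0 c1 (cnj b, cnj a, cnj M1, cnj M2) =
     (a, b, (1 - a*b*H^2) * M2 + a^5 * H^5 * M1, - (b^5 * H^5) * M2 + geom5 (a*b*H^2) * M1)"
    by (simp only: mu_lin_eq Let_def complex_cnj_cnj HH H_def[symmetric])
  have "mu_lin c0 c1 (mu_lin c0 c1 (a,b,x,y)) =
     (a, b, (1 - a*b*H^2) * M2 + a^5 * H^5 * M1, - (b^5 * H^5) * M2 + geom5 (a*b*H^2) * M1)"
    by (simp only: s1 s2)
  also have "\<dots> = (a,b,x,y)"
    using M_matrix_inverse_x[of a b H y x] M_matrix_inverse_y[of b H a y x] by (simp only: M1_def M2_def)
  finally show ?thesis by (simp only: p)
qed

lemma mu_lin_sigma_equivariant:
  assumes t0: "t \<noteq> 0"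
  shows "mu_lin c0 c1 (act t p) = act (sigma t) (mu_lin c0 c1 p)"
proof -
  obtain a b x y where p: "p = (a,b,x,y)" by (cases p) auto
  have ct0: "cnj t \<noteq> 0" using t0 by simp
  have T: "cnj (inverse t ^ 2 * b) * cnj (t^2 * a) = cnj b * cnj a"
    using ct0 by (simp add: field_simps)
  show ?thesis
    unfolding p act_eq mu_lin_eq Let_def T
    using ct0 by (simp add: sigma_def field_simps)
qed

lemma regular_map_conj_mu_lin: "regular_map (conj_pt \<circ> mu_lin c0 c1)"
proof -
  define A where "A = (\<lambda>p::pt. fst p)"
  define B where "B = (\<lambda>p::pt. fst (snd p))"
  define X where "X = (\<lambda>p::pt. fst (snd (snd p)))"
  define Y where "Y = (\<lambda>p::pt. snd (snd (snd p)))"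
  define h where "h = (\<lambda>p. complex_of_real c0 + complex_of_real c1 * (A p * B p))"
  have eq: "(conj_pt \<circ> mu_lin c0 c1) p =
     (B p, A p, (1 - A p * B p * h p ^ 2) * Y p + B p ^ 5 * h p ^ 5 * X p,
      (1 + A p * B p * h p ^ 2 + (A p * B p * h p ^ 2)^2 + (A p * B p * h p ^ 2)^3 + (A p * B p * h p ^ 2)^4) * X p
        - A p ^ 5 * h p ^ 5 * Y p)" for p
    by (cases p) (simp add: mu_lin_eq_cnj conj_pt_def A_def B_def X_def Y_def h_def geom5_eq)
  have "poly4 h" unfolding h_def A_def B_def by (intro poly4_intros)
  then show ?thesis unfolding regular_map_def eq fst_conv snd_conv
    unfolding A_def B_def X_def Y_def by (intro conjI poly4_intros)
qed

lemma real_circle_form_mu_lin: "real_circle_form (mu_lin c0 c1)"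
  unfolding real_circle_form_def antiregular_map_def
  using regular_map_conj_mu_lin mu_lin_involution mu_lin_sigma_equivariant by (auto simp: fun_eq_iff)

section \<open>Scalings give equivalent forms\<close>

definition diag_map :: "real \<Rightarrow> complex \<Rightarrow> pt \<Rightarrow> pt" where
  "diag_map r \<gamma> p = (case p of (a,b,x,y) \<Rightarrow> (of_real r * a, of_real r * b, \<gamma> * x, cnj \<gamma> * y))"

lemma diag_map_inverse:
  assumes "r \<noteq> 0" "\<gamma> * cnj \<gamma> = 1"
  shows "diag_map (inverse r) (cnj \<gamma>) \<circ> diag_map r \<gamma> = id"
    and "diag_map r \<gamma> \<circ> diag_map (inverse r) (cnj \<gamma>) = id"
  using assms by (auto simp: fun_eq_iff diag_map_def mult.assoc[symmetric] mult.commute[of "cnj \<gamma>"])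

lemma regular_map_diag_map: "regular_map (diag_map r \<gamma>)"
  unfolding regular_map_def diag_map_def by (simp add: case_prod_beta poly4_intros)

lemma regular_aut_diag_map:
  assumes "r \<noteq> 0" "\<gamma> * cnj \<gamma> = 1"
  shows "regular_aut (diag_map r \<gamma>)" and "inv (diag_map r \<gamma>) = diag_map (inverse r) (cnj \<gamma>)"
  using diag_map_inverse[OF assms]
  by (auto simp: regular_aut_def regular_map_diag_map o_bij inv_unique_comp)

lemma equivariant_diag_map: "equivariant (diag_map r \<gamma>)"
  by (simp add: equivariant_def diag_map_def act_def mult_ac split: prod.splits)

text \<open>If \<open>r h'(r\<^sup>2 T) = s h(T)\<close> with a sign \<open>s\<close>, then \<open>diag_map r \<gamma>\<close> conjugates \<open>\<mu>\<^sub>h\<close> to \<open>\<mu>\<^sub>h\<^sub>'\<close>; for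
  \<open>s = -1\<close> the phase \<open>\<gamma> = \<i>\<close> absorbs the sign change of the odd powers \<open>h\<^sup>5\<close>.\<close>

lemma mu_lin_diag_map:
  fixes r s :: real and \<gamma> :: complex
  assumes sg: "(s = 1 \<and> \<gamma> = 1) \<or> (s = -1 \<and> \<gamma> = \<i>)"
    and hd: "\<And>z. complex_of_real r * (of_real d0 + of_real d1 * (of_real r * of_real r * z)) = of_real s * (of_real c0 + of_real c1 * z)"
  shows "mu_lin d0 d1 (diag_map r \<gamma> p) = diag_map r \<gamma> (mu_lin c0 c1 p)"
proof -
  obtain a b x y where p: "p = (a,b,x,y)" by (cases p)
  define A where "A = cnj a"
  define B where "B = cnj b"
  define h where "h = complex_of_real c0 + complex_of_real c1 * (B * A)"
  define h' where "h' = complex_of_real d0 + complex_of_real d1 * (of_real r * B * (of_real r * A))"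
  have rh: "of_real r * h' = of_real s * h"
    using hd[of "B * A"] unfolding h'_def h_def by (simp add: mult_ac)
  have s2: "(complex_of_real s)^2 = 1" and s5: "(complex_of_real s)^5 = of_real s" using sg by auto
  have "of_real r * B * (of_real r * A) * h'^2 = B * A * (of_real r * h')^2"
    by (simp add: power2_eq_square mult_ac)
  also have "\<dots> = B * A * h^2" by (simp add: rh power_mult_distrib s2)
  finally have e2: "of_real r * B * (of_real r * A) * h'^2 = B * A * h^2" .
  have e5: "(of_real r * z) ^ 5 * h'^5 = of_real s * (z^5 * h^5)" for z
    using arg_cong[OF rh, of "\<lambda>w. z^5 * w^5"] by (simp add: power_mult_distrib s5 mult_ac)
  have "mu_lin d0 d1 (diag_map r \<gamma> p) =
     (of_real r * B, of_real r * A,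
      (1 - B * A * h^2) * (\<gamma> * cnj y) + of_real s * (B^5 * h^5) * (cnj \<gamma> * cnj x),
      - (of_real s * (A^5 * h^5)) * (\<gamma> * cnj y) + geom5 (B * A * h^2) * (cnj \<gamma> * cnj x))"
    unfolding p diag_map_def prod.case mu_lin_eq Let_def
    by (simp only: complex_cnj_mult complex_cnj_cnj complex_cnj_complex_of_real
        A_def[symmetric] B_def[symmetric] h'_def[symmetric] e2 e5)
  moreover have "mu_lin c0 c1 p =
     (B, A, (1 - B * A * h^2) * cnj y + B^5 * h^5 * cnj x, - (A^5 * h^5) * cnj y + geom5 (B * A * h^2) * cnj x)"
    unfolding p mu_lin_eq Let_def h_def A_def B_def ..
  ultimately show ?thesis using sg by (auto simp: diag_map_def algebra_simps)
qed

lemma equivalent_rcf_if_scaling: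
  fixes \<kappa> :: real
  assumes "\<kappa> \<noteq> 0" and d0: "d0 = \<kappa> * c0" and d1: "d1 = \<kappa>^3 * c1"
  shows "equivalent_rcf (mu_lin c0 c1) (mu_lin d0 d1)"
proof -
  define r where "r = 1 / \<bar>\<kappa>\<bar>"
  define s :: real where "s = (if \<kappa> > 0 then 1 else -1)"
  define \<gamma> :: complex where "\<gamma> = (if \<kappa> > 0 then 1 else \<i>)"
  have r: "r \<noteq> 0" and \<gamma>: "\<gamma> * cnj \<gamma> = 1" and sg: "(s = 1 \<and> \<gamma> = 1) \<or> (s = -1 \<and> \<gamma> = \<i>)"
    using \<open>\<kappa> \<noteq> 0\<close> by (auto simp: r_def s_def \<gamma>_def)
  have rk: "r * \<kappa> = s" and s3: "s^3 = s" using \<open>\<kappa> \<noteq> 0\<close> by (auto simp: r_def s_def)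
  have "complex_of_real r * (of_real d0 + of_real d1 * (of_real r * of_real r * z)) =
      of_real (r * \<kappa>) * of_real c0 + of_real ((r * \<kappa>)^3) * of_real c1 * z" for z
    unfolding d0 d1 by (simp add: algebra_simps power3_eq_cube)
  then have conj: "mu_lin d0 d1 \<circ> diag_map r \<gamma> = diag_map r \<gamma> \<circ> mu_lin c0 c1"
    using mu_lin_diag_map[OF sg] unfolding rk s3 by (simp add: fun_eq_iff algebra_simps)
  have "mu_lin d0 d1 = mu_lin d0 d1 \<circ> (diag_map r \<gamma> \<circ> diag_map (inverse r) (cnj \<gamma>))"
    by (simp add: diag_map_inverse(2)[OF r \<gamma>])
  also have "\<dots> = diag_map r \<gamma> \<circ> mu_lin c0 c1 \<circ> inv (diag_map r \<gamma>)"
    by (simp only: o_assoc conj regular_aut_diag_map(2)[OF r \<gamma>])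
  finally show ?thesis
    unfolding equivalent_rcf_def
    using regular_aut_diag_map[OF r \<gamma>] equivariant_diag_map real_circle_form_mu_lin by blast
qed

section \<open>Conjugate forms have proportional coefficients\<close>

lemma det2_mult_eq_1:
  fixes a11 a12 a21 a22 b11 b12 b21 b22 :: complex
  assumes "a11*b11 + a12*b21 = 1" "a11*b12 + a12*b22 = 0" "a21*b11 + a22*b21 = 0" "a21*b12 + a22*b22 = 1"
  shows "(a11*a22 - a12*a21) * (b11*b22 - b12*b21) = 1"
proof -
  have "(a11*a22 - a12*a21) * (b11*b22 - b12*b21) =
    (a11*b11 + a12*b21)*(a21*b12 + a22*b22) - (a11*b12 + a12*b22)*(a21*b11 + a22*b21)"
    by (simp add: algebra_simps)
  then show ?thesis using assms by simp
qed

lemma tendsto_mu_lin_first_order: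
  fixes d0 d1 :: real
  assumes A: "(A \<longlongrightarrow> a0) (at (0::real))" and B: "(B \<longlongrightarrow> b0) (at (0::real))"
    and X: "((\<lambda>e. X e / of_real e) \<longlongrightarrow> x1) (at (0::real))"
    and Y: "((\<lambda>e. Y e / of_real e) \<longlongrightarrow> y1) (at (0::real))"
  defines "T \<equiv> cnj b0 * cnj a0"
  defines "h \<equiv> complex_of_real d0 + complex_of_real d1 * T"
  shows "((\<lambda>e. fst (snd (snd (mu_lin d0 d1 (A e, B e, X e, Y e)))) / of_real e) \<longlongrightarrow>
           (1 - T * h^2) * cnj y1 + cnj b0 ^ 5 * h^5 * cnj x1) (at (0::real))"
    and "((\<lambda>e. snd (snd (snd (mu_lin d0 d1 (A e, B e, X e, Y e)))) / of_real e) \<longlongrightarrow>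
           - (cnj a0 ^ 5 * h^5) * cnj y1 + geom5 (T * h^2) * cnj x1) (at (0::real))"
proof -
  define Te where "Te e = cnj (B e) * cnj (A e)" for e
  define he where "he e = complex_of_real d0 + complex_of_real d1 * Te e" for e
  have Te: "(Te \<longlongrightarrow> T) (at (0::real))" and he: "(he \<longlongrightarrow> h) (at (0::real))"
    unfolding Te_def[abs_def] he_def[abs_def] T_def h_def by (intro tendsto_intros A B)+
  have geom5: "((\<lambda>e. geom5 (Te e * he e ^ 2)) \<longlongrightarrow> geom5 (T * h ^ 2)) (at (0::real))"
    unfolding geom5_eq by (intro tendsto_intros Te he)
  have cX: "((\<lambda>e. cnj (X e / of_real e)) \<longlongrightarrow> cnj x1) (at (0::real))"
    and cY: "((\<lambda>e. cnj (Y e / of_real e)) \<longlongrightarrow> cnj y1) (at (0::real))"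
    by (rule tendsto_cnj[OF X], rule tendsto_cnj[OF Y])
  have "(\<lambda>e. fst (snd (snd (mu_lin d0 d1 (A e, B e, X e, Y e)))) / of_real e) =
      (\<lambda>e. (1 - Te e * he e ^ 2) * cnj (Y e / of_real e) + cnj (B e) ^ 5 * he e ^ 5 * cnj (X e / of_real e))"
    by (simp add: mu_lin_eq Let_def Te_def he_def add_divide_distrib)
  then show "((\<lambda>e. fst (snd (snd (mu_lin d0 d1 (A e, B e, X e, Y e)))) / of_real e) \<longlongrightarrow>
      (1 - T * h^2) * cnj y1 + cnj b0 ^ 5 * h^5 * cnj x1) (at (0::real))"
    by (simp only:) (intro tendsto_intros Te he cX cY B)
  have "(\<lambda>e. snd (snd (snd (mu_lin d0 d1 (A e, B e, X e, Y e)))) / of_real e) =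
      (\<lambda>e. - (cnj (A e) ^ 5 * he e ^ 5) * cnj (Y e / of_real e) + geom5 (Te e * he e ^ 2) * cnj (X e / of_real e))"
    by (simp add: mu_lin_eq Let_def Te_def he_def add_divide_distrib diff_divide_distrib)
  then show "((\<lambda>e. snd (snd (snd (mu_lin d0 d1 (A e, B e, X e, Y e)))) / of_real e) \<longlongrightarrow>
      - (cnj a0 ^ 5 * h^5) * cnj y1 + geom5 (T * h^2) * cnj x1) (at (0::real))"
    by (simp only:) (intro tendsto_intros he geom5 cX cY A)
qed

lemma le_one_plus_if_square_le:
  fixes x D :: real
  assumes "0 \<le> x" "x^2 \<le> D"
  shows "x \<le> 1 + D"
proof (cases "x \<le> 1")
  case False
  then have "x \<le> x^2" by (simp add: power2_eq_square)
  then show ?thesis using assms by linarith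
next
  case True
  then show ?thesis using assms by (meson order_trans zero_le_power2 add_increasing2)
qed

text \<open>In the application \<open>Y = K \<cdot> L \<cdot> H\<close>, where \<open>L = [[P, t\<^sup>3Q], [t\<^sup>3R, tS]]\<close> is the rescaled
  linear part of \<open>\<psi>\<close> and \<open>H\<close>, \<open>K\<close> are explicit polynomial matrices in \<open>h\<close> and \<open>k\<close>. The four
  linearized conjugacy equations \<open>E1\<close>--\<open>E4\<close> turn into the reality conditions on \<open>Y\<close>, while
  \<open>Q\<close> and \<open>R\<close> can be recovered from \<open>Y\<close>.\<close>

lemma Y_identities:
  fixes P Q R S t H k e :: complex
  assumes ct: "cnj t = t" and cH: "cnj H = H" and ck: "cnj k = k" and phase: "e * cnj e = 1"
  and E1: "P * (1 - t*H^2) - t^5 * Q * H^5 = (1 - t*k^2) * cnj S + e * t^5 * k^5 * cnj Q"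
  and E2: "P * H^5 + Q * geom5 (t*H^2) = (1 - t*k^2) * cnj R + e * k^5 * cnj P"
  and E3: "R * (1 - t*H^2) - S * H^5 = - (cnj e * k^5) * cnj S + geom5 (t*k^2) * cnj Q"
  and E4: "t^5 * R * H^5 + S * geom5 (t*H^2) = - (cnj e * k^5) * t^5 * cnj R + geom5 (t*k^2) * cnj P"
  defines "u \<equiv> t*H^2" and "u' \<equiv> t*k^2"
  defines "W \<equiv> 1 + u + u^2" and "W' \<equiv> 1 + u' + u'^2"
  defines "Y11 \<equiv> W' * cnj e * (P + t^3*Q*H*(1+u)) - k*(t^3*R + t*S*H*(1+u))"
  defines "Y12 \<equiv> W' * cnj e * (P*H + t^2*Q*W) - k*(t^3*R*H + S*W)"
  defines "Y21 \<equiv> - t*k*(1+u') * cnj e * (P + t^3*Q*H*(1+u)) + t^3*R + t*S*H*(1+u)"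
  defines "Y22 \<equiv> - t*k*(1+u') * cnj e * (P*H + t^2*Q*W) + t^3*R*H + S*W"
  shows "cnj Y22 = e * Y11"
    and "cnj Y21 = t * e * Y12"
    and "Y11*Y22 - Y12*Y21 = cnj e * (P*S - t^5*Q*R)"
    and "t^2 * Q = e * (- H * (Y11 + k*Y21) + Y12 + k*Y22)"
    and "t^3 * R = W*(t*k*(1+u')*Y11 + W'*Y21) - t*H*(1+u)*(t*k*(1+u')*Y12 + W'*Y22)"
proof -
  define Pb where "Pb = cnj P"
  define Qb where "Qb = cnj Q"
  define Rb where "Rb = cnj R"
  define Sb where "Sb = cnj S"
  define eb where "eb = cnj e"
  have cu: "cnj u = u" "cnj u' = u'" "cnj W = W" "cnj W' = W'"
    by (simp_all add: u_def u'_def W_def W'_def ct cH ck)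
  have c22: "cnj Y22 = - t*k*(1+u') * e * (Pb*H + t^2*Qb*W) + t^3*Rb*H + Sb*W"
    by (simp add: Y22_def cu ct cH ck Pb_def Qb_def Rb_def Sb_def)
  have c21: "cnj Y21 = - t*k*(1+u') * e * (Pb + t^3*Qb*H*(1+u)) + t^3*Rb + t*Sb*H*(1+u)"
    by (simp add: Y21_def cu ct cH ck Pb_def Qb_def Rb_def Sb_def)
  have ee': "e * eb = 1" using phase by (simp add: eb_def)
  define E1d where "E1d = P * (1 - t*H^2) - t^5 * Q * H^5 - ((1 - t*k^2) * Sb + e * t^5 * k^5 * Qb)"
  define E2d where "E2d = P * H^5 + Q * geom5 (t*H^2) - ((1 - t*k^2) * Rb + e * k^5 * Pb)"
  define E3d where "E3d = R * (1 - t*H^2) - S * H^5 - (- (eb * k^5) * Sb + geom5 (t*k^2) * Qb)"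
  define E4d where "E4d = t^5 * R * H^5 + S * geom5 (t*H^2) - (- (eb * k^5) * t^5 * Rb + geom5 (t*k^2) * Pb)"
  have Ez: "E1d = 0" "E2d = 0" "E3d = 0" "E4d = 0"
    using E1 E2 E3 E4 by (simp_all add: E1d_def E2d_def E3d_def E4d_def Pb_def Qb_def Rb_def Sb_def eb_def)
  have id1: "e * Y11 - cnj Y22 = e*(W*(W'*eb*E1d - k*t^3*E3d) + t*H*(W'*eb*t^2*E2d - k*E4d))"
    unfolding c22 Y11_def W_def W'_def u_def u'_def eb_def[symmetric] E1d_def E2d_def E3d_def E4d_def geom5_eq
    using ee' by algebra
  show "cnj Y22 = e * Y11" using id1 Ez by simp
  have id2: "t * e * Y12 - cnj Y21 = t * e*((W'*eb*E1d - k*t^3*E3d)*H*(1+u) + (W'*eb*t^2*E2d - k*E4d))"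
    unfolding c21 Y12_def W_def W'_def u_def u'_def eb_def[symmetric] E1d_def E2d_def E3d_def E4d_def geom5_eq
    using ee' by algebra
  show "cnj Y21 = t * e * Y12" using id2 Ez by simp
  show "Y11*Y22 - Y12*Y21 = cnj e * (P*S - t^5*Q*R)"
    unfolding Y11_def Y12_def Y21_def Y22_def W_def W'_def u_def u'_def eb_def[symmetric]
    by algebra
  show "t^2 * Q = e * (- H * (Y11 + k*Y21) + Y12 + k*Y22)"
    unfolding Y11_def Y12_def Y21_def Y22_def W_def W'_def u_def u'_def eb_def[symmetric]
    using ee' by algebra
  show "t^3 * R = W*(t*k*(1+u')*Y11 + W'*Y21) - t*H*(1+u)*(t*k*(1+u')*Y12 + W'*Y22)"
    unfolding Y11_def Y12_def Y21_def Y22_def W_def W'_def u_def u'_def eb_def[symmetric]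
    by algebra
qed

locale conjugacy = psi: equivariant_regular \<psi> + phi: equivariant_regular \<phi>
  for \<psi> \<phi> :: "pt \<Rightarrow> pt" +
  fixes c0 c1 d0 d1 :: real
  assumes phi_psi: "\<And>p. \<phi> (\<psi> p) = p"
    and conjugates: "\<And>p. mu_lin d0 d1 (\<psi> p) = \<psi> (mu_lin c0 c1 p)"
begin

definition "\<alpha> = coord_a \<psi> (1,0,0,0)"
definition "\<beta> = coord_b \<psi> (0,1,0,0)"

text \<open>On the zero section the \<open>a\<close>-coordinate of \<open>\<phi>\<close> is a multiple of \<open>a\<close>, so \<open>\<phi> \<circ> \<psi> = id\<close> forces
  the polynomial \<open>t \<mapsto> coord_a \<psi> (1, t, 0, 0)\<close> to have no zero; it is therefore constant.\<close>

lemma coord_a_psi_nonzero: "coord_a \<psi> (1,t,0,0) \<noteq> 0"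
proof
  assume "coord_a \<psi> (1,t,0,0) = 0"
  then have "\<psi> (1,t,0,0) = (0, coord_b \<psi> (1,t,0,0), 0, 0)"
    using pt_eq_coords[of \<psi> "(1,t,0,0)"] psi.coord_xy_zero_section[of 1 t] by simp
  then have "coord_a \<phi> (\<psi> (1,t,0,0)) = 0"
    using phi.coord_a_zero_section[of 0 "coord_b \<psi> (1,t,0,0)"] by simp
  moreover have "coord_a \<phi> (\<psi> (1,t,0,0)) = 1" using phi_psi by (simp add: coord_a_def)
  ultimately show False by simp
qed

lemma coord_b_psi_nonzero: "coord_b \<psi> (t,1,0,0) \<noteq> 0"
proof
  assume "coord_b \<psi> (t,1,0,0) = 0"
  then have "\<psi> (t,1,0,0) = (coord_a \<psi> (t,1,0,0), 0, 0, 0)"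
    using pt_eq_coords[of \<psi> "(t,1,0,0)"] psi.coord_xy_zero_section[of t 1] by simp
  then have "coord_b \<phi> (\<psi> (t,1,0,0)) = 0"
    using phi.coord_b_zero_section[of "coord_a \<psi> (t,1,0,0)" 0] by simp
  moreover have "coord_b \<phi> (\<psi> (t,1,0,0)) = 1" using phi_psi by (simp add: coord_b_def)
  ultimately show False by simp
qed

lemma coord_a_psi_constant: "coord_a \<psi> (1,t,0,0) = \<alpha>"
proof -
  have "polyfun (\<lambda>t. coord_a \<psi> (1,t,0,0))"
    by (intro polyfun_poly4_along_curve psi.poly4_coords polyfun_intros)
  from polyfun_constant_if_nonvanishing[OF this coord_a_psi_nonzero] show ?thesis by (simp add: \<alpha>_def)
qed

lemma coord_b_psi_constant: "coord_b \<psi> (t,1,0,0) = \<beta>"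
proof -
  have "polyfun (\<lambda>t. coord_b \<psi> (t,1,0,0))"
    by (intro polyfun_poly4_along_curve psi.poly4_coords polyfun_intros)
  from polyfun_constant_if_nonvanishing[OF this coord_b_psi_nonzero] show ?thesis by (simp add: \<beta>_def)
qed

lemma alpha_nonzero: "\<alpha> \<noteq> 0" and beta_nonzero: "\<beta> \<noteq> 0"
  using coord_a_psi_nonzero coord_b_psi_nonzero by (simp_all add: \<alpha>_def \<beta>_def)

lemma psi_zero_section: "\<psi> (a,b,0,0) = (\<alpha> * a, \<beta> * b, 0, 0)"
  using pt_eq_coords[of \<psi> "(a,b,0,0)"] psi.coord_xy_zero_section[of a b]
    psi.coord_a_zero_section[of a b] psi.coord_b_zero_section[of a b]
  by (simp add: coord_a_psi_constant coord_b_psi_constant mult.commute)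

lemma alpha_eq_cnj_beta: "\<alpha> = cnj \<beta>"
proof -
  have "mu_lin c0 c1 (1,1,0,0) = (1,1,0,0)" by (simp add: mu_lin_eq)
  then have "mu_lin d0 d1 (\<alpha>, \<beta>, 0, 0) = (\<alpha>, \<beta>, 0, 0)"
    using conjugates[of "(1,1,0,0)"] by (simp add: psi_zero_section)
  then show ?thesis by (simp add: mu_lin_eq)
qed

definition "T_scale = \<alpha> * cnj \<alpha>"

lemma alpha_mult_beta: "\<alpha> * \<beta> = T_scale"
  using alpha_eq_cnj_beta by (simp add: T_scale_def)

text \<open>By equivariance (\<open>partial_coords_normalize\<close>), the linear part of \<open>\<psi>\<close> in \<open>(x, y)\<close> at
  \<open>(a, b, 0, 0)\<close> is \<open>[[p(ab), a\<^sup>5 q(ab)], [b\<^sup>5 r(ab), s(ab)]]\<close> for polynomials \<open>p, q, r, s\<close>; similarly for \<open>\<phi>\<close>.\<close>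

definition "lin_xx t = partial_x (coord_x \<psi>) 1 t"
definition "lin_xy t = partial_y (coord_x \<psi>) 1 t"
definition "lin_yx t = partial_x (coord_y \<psi>) t 1"
definition "lin_yy t = partial_y (coord_y \<psi>) 1 t"
definition "inv_lin_xx t = partial_x (coord_x \<phi>) 1 t"
definition "inv_lin_xy t = partial_y (coord_x \<phi>) 1 t"
definition "inv_lin_yx t = partial_x (coord_y \<phi>) t 1"
definition "inv_lin_yy t = partial_y (coord_y \<phi>) 1 t"

lemma polyfun_lin: "polyfun lin_xx" "polyfun lin_xy" "polyfun lin_yx" "polyfun lin_yy"
    "polyfun inv_lin_xx" "polyfun inv_lin_xy" "polyfun inv_lin_yx" "polyfun inv_lin_yy"
  unfolding lin_xx_def[abs_def] lin_xy_def[abs_def] lin_yx_def[abs_def] lin_yy_def[abs_def]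
    inv_lin_xx_def[abs_def] inv_lin_xy_def[abs_def] inv_lin_yx_def[abs_def] inv_lin_yy_def[abs_def]
  using polyfun_partial_xy[OF psi.poly4_coords(3) psi.coord_xy_zero_section(1)]
    polyfun_partial_xy[OF psi.poly4_coords(4) psi.coord_xy_zero_section(2)]
    polyfun_partial_xy[OF phi.poly4_coords(3) phi.coord_xy_zero_section(1)]
    polyfun_partial_xy[OF phi.poly4_coords(4) phi.coord_xy_zero_section(2)]
  by (simp_all only: polyfun_const polyfun_id)

lemma tendsto_psi_first_order:
  assumes "t \<noteq> 0"
  shows "((\<lambda>e. coord_a \<psi> (1, t, of_real e * x, of_real e * y)) \<longlongrightarrow> \<alpha>) (at (0::real))"
    "((\<lambda>e. coord_b \<psi> (1, t, of_real e * x, of_real e * y)) \<longlongrightarrow> \<beta> * t) (at (0::real))"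
    "((\<lambda>e. coord_x \<psi> (1, t, of_real e * x, of_real e * y) / of_real e) \<longlongrightarrow> lin_xx t * x + lin_xy t * y) (at (0::real))"
    "((\<lambda>e. coord_y \<psi> (1, t, of_real e * x, of_real e * y) / of_real e) \<longlongrightarrow> t^5 * lin_yx t * x + lin_yy t * y) (at (0::real))"
proof -
  have "polyfun (\<lambda>z. coord_a \<psi> (1, t, z * x, z * y))" "polyfun (\<lambda>z. coord_b \<psi> (1, t, z * x, z * y))"
    by (intro polyfun_poly4_along_curve psi.poly4_coords polyfun_intros)+
  from this[THEN polyfun_tendsto_along_reals]
  show "((\<lambda>e. coord_a \<psi> (1, t, of_real e * x, of_real e * y)) \<longlongrightarrow> \<alpha>) (at (0::real))"
    and "((\<lambda>e. coord_b \<psi> (1, t, of_real e * x, of_real e * y)) \<longlongrightarrow> \<beta> * t) (at (0::real))"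
    by (simp_all add: psi_zero_section coord_a_def coord_b_def)
  show "((\<lambda>e. coord_x \<psi> (1, t, of_real e * x, of_real e * y) / of_real e) \<longlongrightarrow> lin_xx t * x + lin_xy t * y) (at (0::real))"
    using tendsto_poly4_line[OF psi.poly4_coords(3) psi.coord_xy_zero_section(1), of 1 t x y]
    by (simp add: lin_xx_def lin_xy_def)
  have "partial_x (coord_y \<psi>) 1 t = t^5 * lin_yx t"
    using psi.partial_x_coord_y_normalize[OF assms, of 1] by (simp add: lin_yx_def)
  then show "((\<lambda>e. coord_y \<psi> (1, t, of_real e * x, of_real e * y) / of_real e) \<longlongrightarrow> t^5 * lin_yx t * x + lin_yy t * y) (at (0::real))"
    using tendsto_poly4_line[OF psi.poly4_coords(4) psi.coord_xy_zero_section(2), of 1 t x y]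
    by (simp add: lin_yy_def)
qed

lemma inv_lin_eqs:
  fixes t x y :: complex
  assumes t: "t \<noteq> 0"
  defines "X1 \<equiv> lin_xx t * x + lin_xy t * y" and "Y1 \<equiv> t^5 * lin_yx t * x + lin_yy t * y"
  shows "x = inv_lin_xx (T_scale*t) * X1 + \<alpha>^5 * inv_lin_xy (T_scale*t) * Y1"
    and "y = (\<beta>*t)^5 * inv_lin_yx (T_scale*t) * X1 + inv_lin_yy (T_scale*t) * Y1"
proof -
  have chain: "((\<lambda>e. F (\<psi> (1, t, of_real e * x, of_real e * y)) / of_real e) \<longlongrightarrow>
      partial_x F \<alpha> (\<beta>*t) * X1 + partial_y F \<alpha> (\<beta>*t) * Y1) (at (0::real))"
    if "poly4 F" "\<And>a b. F (a,b,0,0) = 0" for F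
    using tendsto_poly4_first_order[OF that tendsto_psi_first_order[OF t, of x y]]
    unfolding X1_def Y1_def by (simp only: pt_eq_coords[of \<psi>, symmetric])
  have phi_psi_xy: "coord_x \<phi> (\<psi> p) = fst (snd (snd p))" "coord_y \<phi> (\<psi> p) = snd (snd (snd p))" for p
    by (simp_all add: coord_x_def coord_y_def phi_psi)
  have "((\<lambda>e. of_real e * x / of_real e) \<longlongrightarrow>
      partial_x (coord_x \<phi>) \<alpha> (\<beta>*t) * X1 + partial_y (coord_x \<phi>) \<alpha> (\<beta>*t) * Y1) (at (0::real))"
    using chain[OF phi.poly4_coords(3) phi.coord_xy_zero_section(1)]
    by (simp only: phi_psi_xy fst_conv snd_conv)
  from tendsto_unique[OF _ tendsto_of_real_mult_div this]
  have x: "x = partial_x (coord_x \<phi>) \<alpha> (\<beta>*t) * X1 + partial_y (coord_x \<phi>) \<alpha> (\<beta>*t) * Y1" by simp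
  have "((\<lambda>e. of_real e * y / of_real e) \<longlongrightarrow>
      partial_x (coord_y \<phi>) \<alpha> (\<beta>*t) * X1 + partial_y (coord_y \<phi>) \<alpha> (\<beta>*t) * Y1) (at (0::real))"
    using chain[OF phi.poly4_coords(4) phi.coord_xy_zero_section(2)]
    by (simp only: phi_psi_xy fst_conv snd_conv)
  from tendsto_unique[OF _ tendsto_of_real_mult_div this]
  have y: "y = partial_x (coord_y \<phi>) \<alpha> (\<beta>*t) * X1 + partial_y (coord_y \<phi>) \<alpha> (\<beta>*t) * Y1" by simp
  have ab: "\<alpha> * (\<beta> * t) = T_scale * t" using alpha_mult_beta by (simp add: mult.assoc[symmetric])
  have "\<beta> * t \<noteq> 0" using beta_nonzero t by simp
  note N = phi.partial_coords_normalize[OF alpha_nonzero, of "\<beta>*t", unfolded ab]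
    phi.partial_x_coord_y_normalize[OF this, of \<alpha>, unfolded ab]
  show "x = inv_lin_xx (T_scale*t) * X1 + \<alpha>^5 * inv_lin_xy (T_scale*t) * Y1"
    using x by (simp only: N inv_lin_xx_def inv_lin_xy_def)
  show "y = (\<beta>*t)^5 * inv_lin_yx (T_scale*t) * X1 + inv_lin_yy (T_scale*t) * Y1"
    using y by (simp only: N inv_lin_yx_def inv_lin_yy_def)
qed

definition "lin_det t = lin_xx t * lin_yy t - t^5 * lin_xy t * lin_yx t"
definition "inv_lin_det t = inv_lin_xx t * inv_lin_yy t - t^5 * inv_lin_xy t * inv_lin_yx t"

lemma inv_lin_det_mult_lin_det:
  assumes "t \<noteq> 0" shows "inv_lin_det (T_scale*t) * lin_det t = 1"
proof -
  have e: "(\<alpha>^5 * inv_lin_xy (T_scale*t)) * ((\<beta>*t)^5 * inv_lin_yx (T_scale*t))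
      = (T_scale*t)^5 * inv_lin_xy (T_scale*t) * inv_lin_yx (T_scale*t)"
    by (simp add: alpha_mult_beta[symmetric] power_mult_distrib mult_ac)
  have "(inv_lin_xx (T_scale*t) * inv_lin_yy (T_scale*t)
        - (\<alpha>^5 * inv_lin_xy (T_scale*t)) * ((\<beta>*t)^5 * inv_lin_yx (T_scale*t)))
      * (lin_xx t * lin_yy t - lin_xy t * (t^5 * lin_yx t)) = 1"
    using inv_lin_eqs[OF assms, of 1 0] inv_lin_eqs[OF assms, of 0 1]
    by (intro det2_mult_eq_1) (simp_all add: algebra_simps)
  then show ?thesis
    unfolding lin_det_def inv_lin_det_def e by (simp add: mult_ac)
qed

lemma polyfun_lin_det: "polyfun lin_det" "polyfun inv_lin_det"
  unfolding lin_det_def[abs_def] inv_lin_det_def[abs_def]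
  by (intro polyfun_intros polyfun_lin)+

text \<open>\<open>lin_det\<close> has a polynomial inverse, so it has no zeros and is constant by the fundamental
  theorem of algebra.\<close>

lemma lin_det_constant: "lin_det t = lin_det 0" and lin_det_nonzero: "lin_det 0 \<noteq> 0"
proof -
  have "polyfun (\<lambda>t. inv_lin_det (T_scale*t) * lin_det t)"
    by (intro polyfun_mult polyfun_compose[OF polyfun_lin_det(2)] polyfun_intros polyfun_lin_det(1))
  then have "inv_lin_det (T_scale*z) * lin_det z = 1" for z
    by (rule polyfun_eq_if_eq_on_nonzero_reals[OF _ polyfun_const]) (simp add: inv_lin_det_mult_lin_det)
  then have nz: "lin_det z \<noteq> 0" for z by (metis mult_zero_right zero_neq_one)
  then show "lin_det t = lin_det 0" by (rule polyfun_constant_if_nonvanishing[OF polyfun_lin_det(1)])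
  show "lin_det 0 \<noteq> 0" by (rule nz)
qed

lemma mu_lin_real_line:
  fixes \<sigma> e :: real
  defines "t \<equiv> complex_of_real \<sigma>"
  defines "H \<equiv> complex_of_real c0 + complex_of_real c1 * t"
  shows "mu_lin c0 c1 (1, t, of_real e * x, of_real e * y) =
    (t, 1, of_real e * ((1 - t * H^2) * cnj y + t^5 * H^5 * cnj x),
           of_real e * (- (H^5) * cnj y + geom5 (t * H^2) * cnj x))"
proof -
  have "cnj t = t" by (simp add: t_def)
  then show ?thesis unfolding mu_lin_eq Let_def by (simp add: H_def algebra_simps)
qed

text \<open>The first-order parts of both sides of \<open>\<mu>\<^sub>h\<^sub>' \<circ> \<psi> = \<psi> \<circ> \<mu>\<^sub>h\<close> along the curve
  \<open>e \<mapsto> (1, t, e x, e y)\<close> with real \<open>t\<close>; note that \<open>\<mu>\<^sub>h\<close> maps this curve to \<open>(t, 1, \<dots>)\<close>.\<close>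

lemma lin_conj_eqs:
  fixes \<sigma> :: real and x y :: complex
  assumes "\<sigma> \<noteq> 0"
  defines "t \<equiv> complex_of_real \<sigma>"
  defines "H \<equiv> complex_of_real c0 + complex_of_real c1 * t"
  defines "g \<equiv> complex_of_real d0 + complex_of_real d1 * (T_scale * t)"
  defines "m1 \<equiv> (1 - t * H^2) * cnj y + t^5 * H^5 * cnj x"
  defines "m2 \<equiv> - (H^5) * cnj y + geom5 (t * H^2) * cnj x"
  defines "X1 \<equiv> lin_xx t * x + lin_xy t * y"
  defines "Y1 \<equiv> t^5 * lin_yx t * x + lin_yy t * y"
  shows "lin_xx t * m1 + t^5 * lin_xy t * m2 = (1 - T_scale * t * g^2) * cnj Y1 + \<alpha>^5 * t^5 * g^5 * cnj X1"
    and "lin_yx t * m1 + lin_yy t * m2 = - (cnj \<alpha> ^ 5 * g^5) * cnj Y1 + geom5 (T_scale * t * g^2) * cnj X1"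
proof -
  have t0: "t \<noteq> 0" and ct: "cnj t = t" using assms(1) by (simp_all add: t_def)
  define pe where "pe e = ((1::complex), t, complex_of_real e * x, complex_of_real e * y)" for e :: real
  have mc: "mu_lin c0 c1 (pe e) = (t, 1, of_real e * m1, of_real e * m2)" for e
    unfolding pe_def m1_def m2_def H_def t_def by (rule mu_lin_real_line)
  have conj_pe: "coord_x \<psi> (mu_lin c0 c1 (pe e)) = fst (snd (snd (mu_lin d0 d1
        (coord_a \<psi> (pe e), coord_b \<psi> (pe e), coord_x \<psi> (pe e), coord_y \<psi> (pe e)))))"
      "coord_y \<psi> (mu_lin c0 c1 (pe e)) = snd (snd (snd (mu_lin d0 d1
        (coord_a \<psi> (pe e), coord_b \<psi> (pe e), coord_x \<psi> (pe e), coord_y \<psi> (pe e)))))" for e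
    unfolding pt_eq_coords[of \<psi> "pe e", symmetric] conjugates by (simp_all add: coord_x_def coord_y_def)
  note N = psi.partial_coords_normalize[OF t0, of 1, simplified]
  have LX: "((\<lambda>e. coord_x \<psi> (mu_lin c0 c1 (pe e)) / of_real e) \<longlongrightarrow> lin_xx t * m1 + t^5 * lin_xy t * m2) (at (0::real))"
    using tendsto_poly4_line[OF psi.poly4_coords(3) psi.coord_xy_zero_section(1), of t 1 m1 m2]
    unfolding mc N by (simp add: lin_xx_def lin_xy_def mult.assoc)
  have LY: "((\<lambda>e. coord_y \<psi> (mu_lin c0 c1 (pe e)) / of_real e) \<longlongrightarrow> lin_yx t * m1 + lin_yy t * m2) (at (0::real))"
    using tendsto_poly4_line[OF psi.poly4_coords(4) psi.coord_xy_zero_section(2), of t 1 m1 m2]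
    unfolding mc N by (simp add: lin_yx_def lin_yy_def)
  have T: "cnj (\<beta> * t) * cnj \<alpha> = T_scale * t" and cb: "cnj (\<beta> * t) ^ 5 = \<alpha>^5 * t^5"
    using alpha_eq_cnj_beta ct by (simp_all add: T_scale_def mult_ac power_mult_distrib)
  note R = tendsto_mu_lin_first_order[OF tendsto_psi_first_order[OF t0, of x y], of d0 d1,
      folded pe_def X1_def Y1_def, unfolded T, folded g_def conj_pe]
  show "lin_xx t * m1 + t^5 * lin_xy t * m2 = (1 - T_scale * t * g^2) * cnj Y1 + \<alpha>^5 * t^5 * g^5 * cnj X1"
    using tendsto_unique[OF _ LX R(1)[unfolded cb]] by (simp add: mult_ac)
  show "lin_yx t * m1 + lin_yy t * m2 = - (cnj \<alpha> ^ 5 * g^5) * cnj Y1 + geom5 (T_scale * t * g^2) * cnj X1"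
    using tendsto_unique[OF _ LY R(2)] by (simp add: mult_ac)
qed

lemma lin_conj_eqs_basis:
  fixes \<sigma> :: real
  assumes s0: "\<sigma> \<noteq> 0"
  defines "t \<equiv> complex_of_real \<sigma>"
  defines "H \<equiv> complex_of_real c0 + complex_of_real c1 * t"
  defines "g \<equiv> complex_of_real d0 + complex_of_real d1 * (T_scale * t)"
  shows "lin_xx t * (1 - t*H^2) - t^5 * lin_xy t * H^5 = (1 - T_scale*t*g^2) * cnj (lin_yy t) + \<alpha>^5*t^5*g^5 * cnj (lin_xy t)"
    and "lin_xx t * H^5 + lin_xy t * geom5 (t*H^2) = (1 - T_scale*t*g^2) * cnj (lin_yx t) + \<alpha>^5 * g^5 * cnj (lin_xx t)"
    and "lin_yx t * (1 - t*H^2) - lin_yy t * H^5 = - (cnj \<alpha> ^ 5 * g^5) * cnj (lin_yy t) + geom5 (T_scale*t*g^2) * cnj (lin_xy t)"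
    and "t^5 * lin_yx t * H^5 + lin_yy t * geom5 (t*H^2) = - (cnj \<alpha> ^ 5 * g^5) * t^5 * cnj (lin_yx t) + geom5 (T_scale*t*g^2) * cnj (lin_xx t)"
proof -
  have t0: "t \<noteq> 0" and ct: "cnj t = t" using s0 by (simp_all add: t_def)
  note A = lin_conj_eqs[OF s0, where x=0 and y=1, folded t_def, folded H_def, folded g_def]
  note B = lin_conj_eqs[OF s0, where x=1 and y=0, folded t_def, folded H_def, folded g_def]
  show "lin_xx t * (1 - t*H^2) - t^5 * lin_xy t * H^5 = (1 - T_scale*t*g^2) * cnj (lin_yy t) + \<alpha>^5*t^5*g^5 * cnj (lin_xy t)"
    using A(1) by (simp add: algebra_simps)
  show "lin_yx t * (1 - t*H^2) - lin_yy t * H^5 = - (cnj \<alpha> ^ 5 * g^5) * cnj (lin_yy t) + geom5 (T_scale*t*g^2) * cnj (lin_xy t)"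
    using A(2) by (simp add: algebra_simps)
  have "t^5 * (lin_xx t * H^5 + lin_xy t * geom5 (t*H^2)) = t^5 * ((1 - T_scale*t*g^2) * cnj (lin_yx t) + \<alpha>^5 * g^5 * cnj (lin_xx t))"
    using B(1) ct by (simp add: algebra_simps)
  then show "lin_xx t * H^5 + lin_xy t * geom5 (t*H^2) = (1 - T_scale*t*g^2) * cnj (lin_yx t) + \<alpha>^5 * g^5 * cnj (lin_xx t)"
    using t0 by simp
  show "t^5 * lin_yx t * H^5 + lin_yy t * geom5 (t*H^2) = - (cnj \<alpha> ^ 5 * g^5) * t^5 * cnj (lin_yx t) + geom5 (T_scale*t*g^2) * cnj (lin_xx t)"
    using B(2) ct by (simp add: algebra_simps)
qed

text \<open>\<open>kd\<close> is \<open>h'\<close> transported by \<open>\<psi>\<close>, which multiplies \<open>T = ab\<close> by \<open>|\<alpha>|\<^sup>2\<close>, and rescaled by \<open>|\<alpha>|\<close>;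
  \<open>phase\<close> is the remaining unit factor of \<open>\<alpha>\<^sup>5\<close>. With these, the linearized conjugacy equations
  take the symmetric form required by \<open>Y_identities\<close>.\<close>

definition "rho = cmod \<alpha>"
definition "phase = (\<alpha> / of_real rho)^5"
definition "hc t = complex_of_real c0 + complex_of_real c1 * t"
definition "kd t = complex_of_real rho * (complex_of_real d0 + complex_of_real d1 * (T_scale * t))"
definition "uc t = t * (hc t)^2"
definition "ud t = t * (kd t)^2"
definition "Wc t = 1 + uc t + (uc t)^2"
definition "Wd t = 1 + ud t + (ud t)^2"
definition "Y11 t = Wd t * cnj phase * (lin_xx t + t^3*lin_xy t*hc t*(1+uc t)) - kd t*(t^3*lin_yx t + t*lin_yy t*hc t*(1+uc t))"
definition "Y12 t = Wd t * cnj phase * (lin_xx t*hc t + t^2*lin_xy t*Wc t) - kd t*(t^3*lin_yx t*hc t + lin_yy t*Wc t)"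
definition "Y21 t = - t*kd t*(1+ud t) * cnj phase * (lin_xx t + t^3*lin_xy t*hc t*(1+uc t)) + t^3*lin_yx t + t*lin_yy t*hc t*(1+uc t)"
definition "Y22 t = - t*kd t*(1+ud t) * cnj phase * (lin_xx t*hc t + t^2*lin_xy t*Wc t) + t^3*lin_yx t*hc t + lin_yy t*Wc t"

lemma rho_pos: "rho > 0" using alpha_nonzero by (simp add: rho_def)

lemma phase_unit: "phase * cnj phase = 1"
proof -
  have "(\<alpha> / of_real rho) * cnj (\<alpha> / of_real rho) = 1"
    using rho_pos complex_norm_square[of \<alpha>] by (simp add: rho_def field_simps power2_eq_square)
  then show ?thesis unfolding phase_def by (metis complex_cnj_power power_mult_distrib power_one)
qed

lemma T_scale_eq: "T_scale = of_real (rho^2)"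
  by (simp only: T_scale_def rho_def complex_norm_square)

lemma lin_conj_eqs_normalized:
  fixes \<sigma> :: real
  assumes s0: "\<sigma> \<noteq> 0"
  defines "t \<equiv> complex_of_real \<sigma>"
  shows "lin_xx t * (1 - t*hc t^2) - t^5 * lin_xy t * hc t^5 = (1 - t*kd t^2) * cnj (lin_yy t) + phase * t^5 * kd t^5 * cnj (lin_xy t)"
    and "lin_xx t * hc t^5 + lin_xy t * geom5 (t*hc t^2) = (1 - t*kd t^2) * cnj (lin_yx t) + phase * kd t^5 * cnj (lin_xx t)"
    and "lin_yx t * (1 - t*hc t^2) - lin_yy t * hc t^5 = - (cnj phase * kd t^5) * cnj (lin_yy t) + geom5 (t*kd t^2) * cnj (lin_xy t)"
    and "t^5 * lin_yx t * hc t^5 + lin_yy t * geom5 (t*hc t^2) = - (cnj phase * kd t^5) * t^5 * cnj (lin_yx t) + geom5 (t*kd t^2) * cnj (lin_xx t)"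
proof -
  define g where "g = complex_of_real d0 + complex_of_real d1 * (T_scale * t)"
  note E = lin_conj_eqs_basis[OF s0, folded t_def, folded g_def]
  have kg: "kd t = of_real rho * g" by (simp add: kd_def g_def)
  have r0: "complex_of_real rho \<noteq> 0" using rho_pos by simp
  have a5: "\<alpha>^5 * g^5 = phase * kd t ^ 5" and ca5: "cnj \<alpha> ^ 5 * g^5 = cnj phase * kd t ^ 5"
    unfolding kg phase_def using r0 by (simp_all add: power_mult_distrib power_divide)
  have wk: "T_scale * t * g^2 = t * kd t ^ 2"
    unfolding kg T_scale_eq by (simp add: power_mult_distrib)
  show "lin_xx t * (1 - t*hc t^2) - t^5 * lin_xy t * hc t^5 = (1 - t*kd t^2) * cnj (lin_yy t) + phase * t^5 * kd t^5 * cnj (lin_xy t)"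
    using E(1) unfolding hc_def[symmetric] wk by (simp add: a5[symmetric] mult_ac)
  show "lin_xx t * hc t^5 + lin_xy t * geom5 (t*hc t^2) = (1 - t*kd t^2) * cnj (lin_yx t) + phase * kd t^5 * cnj (lin_xx t)"
    using E(2) unfolding hc_def[symmetric] wk by (simp add: a5[symmetric] mult_ac)
  show "lin_yx t * (1 - t*hc t^2) - lin_yy t * hc t^5 = - (cnj phase * kd t^5) * cnj (lin_yy t) + geom5 (t*kd t^2) * cnj (lin_xy t)"
    using E(3) unfolding hc_def[symmetric] wk ca5 .
  show "t^5 * lin_yx t * hc t^5 + lin_yy t * geom5 (t*hc t^2) = - (cnj phase * kd t^5) * t^5 * cnj (lin_yx t) + geom5 (t*kd t^2) * cnj (lin_xx t)"
    using E(4) unfolding hc_def[symmetric] wk ca5 .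
qed

lemma Y_identities_at_real:
  fixes \<sigma> :: real
  assumes s0: "\<sigma> \<noteq> 0"
  defines "t \<equiv> complex_of_real \<sigma>"
  shows "cnj (Y22 t) = phase * Y11 t"
    and "cnj (Y21 t) = t * phase * Y12 t"
    and "Y11 t * Y22 t - Y12 t * Y21 t = cnj phase * lin_det t"
    and "t^2 * lin_xy t = phase * (- hc t * (Y11 t + kd t * Y21 t) + Y12 t + kd t * Y22 t)"
    and "t^3 * lin_yx t = Wc t*(t*kd t*(1+ud t)*Y11 t + Wd t*Y21 t) - t*hc t*(1+uc t)*(t*kd t*(1+ud t)*Y12 t + Wd t*Y22 t)"
proof -
  have ct: "cnj t = t" by (simp add: t_def)
  have "cnj (hc t) = hc t" "cnj (kd t) = kd t" using ct by (simp_all add: hc_def kd_def T_scale_eq)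
  note M = Y_identities[OF ct this phase_unit lin_conj_eqs_normalized[OF s0, folded t_def]]
  show "cnj (Y22 t) = phase * Y11 t"
    using M(1) unfolding Y22_def Y11_def Wc_def Wd_def uc_def ud_def .
  show "cnj (Y21 t) = t * phase * Y12 t"
    using M(2) unfolding Y21_def Y12_def Wc_def Wd_def uc_def ud_def .
  show "Y11 t * Y22 t - Y12 t * Y21 t = cnj phase * lin_det t"
    using M(3) unfolding Y11_def Y12_def Y21_def Y22_def Wc_def Wd_def uc_def ud_def lin_det_def .
  show "t^2 * lin_xy t = phase * (- hc t * (Y11 t + kd t * Y21 t) + Y12 t + kd t * Y22 t)"
    using M(4) unfolding Y11_def Y12_def Y21_def Y22_def Wc_def Wd_def uc_def ud_def .
  show "t^3 * lin_yx t = Wc t*(t*kd t*(1+ud t)*Y11 t + Wd t*Y21 t) - t*hc t*(1+uc t)*(t*kd t*(1+ud t)*Y12 t + Wd t*Y22 t)"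
    using M(5) unfolding Y11_def Y12_def Y21_def Y22_def Wc_def Wd_def uc_def ud_def .
qed

lemma polyfun_coefficient_functions:
  "polyfun hc" "polyfun kd" "polyfun uc" "polyfun ud" "polyfun Wc" "polyfun Wd"
  unfolding hc_def[abs_def] kd_def[abs_def] uc_def[abs_def] ud_def[abs_def] Wc_def[abs_def] Wd_def[abs_def]
  by (intro polyfun_intros)+

lemma polyfun_Y: "polyfun Y11" "polyfun Y12"
  unfolding Y11_def[abs_def] Y12_def[abs_def]
  by (intro polyfun_intros polyfun_lin polyfun_coefficient_functions)+

lemma Y_norm_identity:
  fixes \<sigma> :: real
  assumes s0: "\<sigma> \<noteq> 0"
  shows "complex_of_real ((cmod (Y11 (of_real \<sigma>)))^2 - \<sigma> * (cmod (Y12 (of_real \<sigma>)))^2) = lin_det 0"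
proof -
  define t where "t = complex_of_real \<sigma>"
  note A = Y_identities_at_real[OF s0, folded t_def]
  have ct: "cnj t = t" by (simp add: t_def)
  have e1: "cnj (Y11 t) = phase * Y22 t"
  proof -
    have "Y22 t = cnj phase * cnj (Y11 t)" using arg_cong[OF A(1), of cnj] by simp
    then have "phase * Y22 t = (phase * cnj phase) * cnj (Y11 t)" by (simp only: mult_ac)
    then show ?thesis using phase_unit by simp
  qed
  have e2: "t * cnj (Y12 t) = phase * Y21 t"
  proof -
    have "Y21 t = t * cnj phase * cnj (Y12 t)" using arg_cong[OF A(2), of cnj] ct by simp
    then have "phase * Y21 t = t * (phase * cnj phase) * cnj (Y12 t)" by (simp only: mult_ac)
    then show ?thesis using phase_unit by simp
  qed
  have "Y11 t * cnj (Y11 t) - t * (Y12 t * cnj (Y12 t)) = phase * (Y11 t * Y22 t - Y12 t * Y21 t)"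
    unfolding e1 mult.left_commute[of t] e2 by (simp only: right_diff_distrib mult_ac)
  also have "\<dots> = (phase * cnj phase) * lin_det t" using A(3) by (simp only: mult_ac)
  also have "\<dots> = lin_det t" using phase_unit by simp
  also have "\<dots> = lin_det 0" by (rule lin_det_constant)
  finally have fin: "Y11 t * cnj (Y11 t) - t * (Y12 t * cnj (Y12 t)) = lin_det 0" .
  have "complex_of_real ((cmod (Y11 t))^2 - \<sigma> * (cmod (Y12 t))^2) = Y11 t * cnj (Y11 t) - t * (Y12 t * cnj (Y12 t))"
    by (simp only: of_real_diff of_real_mult complex_norm_square t_def)
  then show ?thesis using fin by (simp only: t_def)
qed

text \<open>For real \<open>t \<le> -1\<close> both terms of \<open>|Y11 t|\<^sup>2 + |t| |Y12 t|\<^sup>2 = lin_det 0\<close> are bounded, so the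
  polynomials \<open>Y11\<close> and \<open>Y12\<close> are constant; comparing \<open>t = -1\<close> and \<open>t = -2\<close> then gives \<open>Y12 = 0\<close>.\<close>

lemma Y_norm_identity_Re:
  assumes "\<sigma> \<noteq> 0"
  shows "(cmod (Y11 (of_real \<sigma>)))^2 - \<sigma> * (cmod (Y12 (of_real \<sigma>)))^2 = Re (lin_det 0)"
  using arg_cong[OF Y_norm_identity[OF assms], of Re] by simp

lemma Y_bounded_on_ray:
  assumes "\<sigma> \<le> -1"
  shows "cmod (Y11 (of_real \<sigma>)) \<le> 1 + Re (lin_det 0)" "cmod (Y12 (of_real \<sigma>)) \<le> 1 + Re (lin_det 0)"
proof -
  have "(cmod (Y12 (of_real \<sigma>)))^2 \<le> - \<sigma> * (cmod (Y12 (of_real \<sigma>)))^2"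
    using assms mult_right_mono[of 1 "-\<sigma>" "(cmod (Y12 (of_real \<sigma>)))^2"] by simp
  then have "(cmod (Y11 (of_real \<sigma>)))^2 \<le> Re (lin_det 0)" "(cmod (Y12 (of_real \<sigma>)))^2 \<le> Re (lin_det 0)"
    using Y_norm_identity_Re[of \<sigma>] assms zero_le_power2[of "cmod (Y12 (of_real \<sigma>))"]
      zero_le_power2[of "cmod (Y11 (of_real \<sigma>))"] by linarith+
  then show "cmod (Y11 (of_real \<sigma>)) \<le> 1 + Re (lin_det 0)" "cmod (Y12 (of_real \<sigma>)) \<le> 1 + Re (lin_det 0)"
    by (simp_all add: le_one_plus_if_square_le)
qed

definition "lam = Y11 0"

lemma Y_constant: "Y11 z = lam" "Y12 z = 0" and lam_nonzero: "lam \<noteq> 0"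
proof -
  have c1: "Y11 z = Y11 0" and c2: "Y12 z = Y12 0" for z
    using polyfun_constant_if_bounded_on_ray[OF polyfun_Y(1) Y_bounded_on_ray(1)]
      polyfun_constant_if_bounded_on_ray[OF polyfun_Y(2) Y_bounded_on_ray(2)] by blast+
  have n1: "(cmod lam)^2 + (cmod (Y12 0))^2 = Re (lin_det 0)"
    using Y_norm_identity_Re[of "-1"] c1[of "of_real (-1)"] c2[of "of_real (-1)"] by (simp add: lam_def)
  moreover have "(cmod lam)^2 + 2 * (cmod (Y12 0))^2 = Re (lin_det 0)"
    using Y_norm_identity_Re[of "-2"] c1[of "of_real (-2)"] c2[of "of_real (-2)"] by (simp add: lam_def)
  ultimately have "(cmod (Y12 0))^2 = 0" by linarith
  then have y0: "Y12 0 = 0" by simp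
  show "Y11 z = lam" using c1[of z] by (simp only: lam_def)
  show "Y12 z = 0" using c2[of z] y0 by simp
  have "lin_det 0 = of_real (Re (lin_det 0))"
    using Y_norm_identity[of "-1"] Y_norm_identity_Re[of "-1"] by (metis neg_one_neq_zero)
  then have "lin_det 0 = of_real ((cmod lam)^2)" using n1 y0 by simp
  then show "lam \<noteq> 0" using lin_det_nonzero by auto
qed

definition "lam2 = cnj phase * cnj lam"

lemma Y2_values:
  fixes \<sigma> :: real
  assumes s0: "\<sigma> \<noteq> 0"
  shows "Y21 (of_real \<sigma>) = 0" "Y22 (of_real \<sigma>) = lam2"
proof -
  note A = Y_identities_at_real[OF s0]
  have "cnj (Y21 (of_real \<sigma>)) = 0" using A(2) Y_constant by simp
  then show "Y21 (of_real \<sigma>) = 0" by simp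
  have "Y22 (of_real \<sigma>) = cnj (phase * Y11 (of_real \<sigma>))" using arg_cong[OF A(1), of cnj] by simp
  then show "Y22 (of_real \<sigma>) = lam2" using Y_constant by (simp add: lam2_def)
qed

text \<open>With \<open>Y\<^sub>1\<^sub>1 = lam\<close>, \<open>Y\<^sub>1\<^sub>2 = Y\<^sub>2\<^sub>1 = 0\<close> and \<open>Y\<^sub>2\<^sub>2 = lam2\<close>, the formulas for \<open>t\<^sup>2 Q\<close> and \<open>t\<^sup>3 R\<close> become
  polynomial identities whose lowest coefficients force \<open>kd = \<plusminus>hc\<close>.\<close>

definition "k0 = complex_of_real (rho * d0)"
definition "k1 = complex_of_real (rho^3 * d1)"

lemma kd_linear: "kd t = k0 + k1 * t"
  unfolding kd_def k0_def k1_def T_scale_eq by (simp add: algebra_simps power2_eq_square power3_eq_cube)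

lemma phase_nonzero: "phase \<noteq> 0" using phase_unit by auto

lemma lin_xy_eq: "z^2 * lin_xy z = phase * (kd z * lam2 - hc z * lam)"
proof (rule polyfun_eq_if_eq_on_nonzero_reals[of "\<lambda>z. z^2 * lin_xy z" "\<lambda>z. phase * (kd z * lam2 - hc z * lam)"])
  show "polyfun (\<lambda>z. z^2 * lin_xy z)" by (intro polyfun_intros polyfun_lin)
  show "polyfun (\<lambda>z. phase * (kd z * lam2 - hc z * lam))"
    by (intro polyfun_intros polyfun_coefficient_functions)
  fix x :: real assume x: "x \<noteq> 0"
  show "(of_real x)^2 * lin_xy (of_real x) = phase * (kd (of_real x) * lam2 - hc (of_real x) * lam)"
    using Y_identities_at_real(4)[OF x] Y2_values[OF x] Y_constant by (simp add: algebra_simps)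
qed

lemma k0_mult_lam2: "k0 * lam2 = complex_of_real c0 * lam"
  using lin_xy_eq[of 0] phase_nonzero by (simp add: kd_linear hc_def)

lemma lin_xy_eq_const: "z * lin_xy z = phase * (k1 * lam2 - complex_of_real c1 * lam)"
proof (rule polyfun_eq_if_eq_on_nonzero_reals[of "\<lambda>z. z * lin_xy z" "\<lambda>z. phase * (k1 * lam2 - complex_of_real c1 * lam)"])
  show "polyfun (\<lambda>z. z * lin_xy z)" by (intro polyfun_intros polyfun_lin)
  show "polyfun (\<lambda>z. phase * (k1 * lam2 - complex_of_real c1 * lam))" by (rule polyfun_const)
  fix x :: real assume x: "x \<noteq> 0"
  define t where "t = complex_of_real x"
  have t0: "t \<noteq> 0" using x by (simp add: t_def)
  have "t * (t * lin_xy t) = t * (phase * (k1 * lam2 - complex_of_real c1 * lam))"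
    using lin_xy_eq[of t] k0_mult_lam2 unfolding kd_linear hc_def by (simp add: algebra_simps power2_eq_square)
  then show "(of_real x) * lin_xy (of_real x) = phase * (k1 * lam2 - complex_of_real c1 * lam)"
    using t0 by (simp add: t_def)
qed

lemma k1_mult_lam2: "k1 * lam2 = complex_of_real c1 * lam"
  using lin_xy_eq_const[of 0] phase_nonzero by simp

definition "Fr t = kd t * (1 + ud t) * Wc t * lam - hc t * (1 + uc t) * Wd t * lam2"

lemma polyfun_Fr: "polyfun Fr"
  unfolding Fr_def[abs_def] by (intro polyfun_intros polyfun_coefficient_functions)

lemma lin_yx_eq: "z^2 * lin_yx z = Fr z"
proof (rule polyfun_eq_if_eq_on_nonzero_reals[of "\<lambda>z. z^2 * lin_yx z" Fr])
  show "polyfun (\<lambda>z. z^2 * lin_yx z)" by (intro polyfun_intros polyfun_lin)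
  show "polyfun Fr" by (rule polyfun_Fr)
  fix x :: real assume x: "x \<noteq> 0"
  define t where "t = complex_of_real x"
  have t0: "t \<noteq> 0" using x by (simp add: t_def)
  have "t * (t^2 * lin_yx t) = t * Fr t"
    using Y_identities_at_real(5)[OF x, folded t_def] Y2_values[OF x, folded t_def] Y_constant
    unfolding Fr_def by (simp add: algebra_simps power2_eq_square power3_eq_cube)
  then show "(of_real x)^2 * lin_yx (of_real x) = Fr (of_real x)"
    using t0 by (simp add: t_def)
qed

lemma k0_mult_lam: "k0 * lam = complex_of_real c0 * lam2"
  using lin_yx_eq[of 0] by (simp add: Fr_def kd_linear hc_def uc_def ud_def Wc_def Wd_def)

definition "Dr t = ((hc t)^2 - (kd t)^2) * ((hc t)^2 + (kd t)^2 + t * (hc t)^2 * (kd t)^2)"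

lemma Fr_decomp: "Fr t = k0 * lam * t^2 * Dr t
    + t * (k1 * (1 + ud t) * Wc t * lam - complex_of_real c1 * (1 + uc t) * Wd t * lam2)
    + (k0 * lam - complex_of_real c0 * lam2) * ((1 + uc t) * Wd t)"
  unfolding Fr_def Dr_def kd_linear hc_def uc_def ud_def Wc_def Wd_def by algebra

lemma lin_yx_eq_reduced: "z * lin_yx z - k0 * lam * z * Dr z =
    k1 * (1 + ud z) * Wc z * lam - complex_of_real c1 * (1 + uc z) * Wd z * lam2"
proof (rule polyfun_eq_if_eq_on_nonzero_reals[of "\<lambda>z. z * lin_yx z - k0 * lam * z * Dr z"
      "\<lambda>z. k1 * (1 + ud z) * Wc z * lam - complex_of_real c1 * (1 + uc z) * Wd z * lam2"])
  have "polyfun Dr" unfolding Dr_def[abs_def] by (intro polyfun_intros polyfun_coefficient_functions)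
  then show "polyfun (\<lambda>z. z * lin_yx z - k0 * lam * z * Dr z)"
    by (intro polyfun_intros polyfun_lin)
  show "polyfun (\<lambda>z. k1 * (1 + ud z) * Wc z * lam - complex_of_real c1 * (1 + uc z) * Wd z * lam2)"
    by (intro polyfun_intros polyfun_coefficient_functions)
  fix x :: real assume x: "x \<noteq> 0"
  define t where "t = complex_of_real x"
  have t0: "t \<noteq> 0" using x by (simp add: t_def)
  have "t * (t * lin_yx t - k0 * lam * t * Dr t) =
      t * (k1 * (1 + ud t) * Wc t * lam - complex_of_real c1 * (1 + uc t) * Wd t * lam2)"
    using lin_yx_eq[of t] Fr_decomp[of t] k0_mult_lam by (simp add: algebra_simps power2_eq_square)
  then show "of_real x * lin_yx (of_real x) - k0 * lam * of_real x * Dr (of_real x) =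
      k1 * (1 + ud (of_real x)) * Wc (of_real x) * lam - complex_of_real c1 * (1 + uc (of_real x)) * Wd (of_real x) * lam2"
    using t0 by (simp add: t_def)
qed

lemma k1_mult_lam: "k1 * lam = complex_of_real c1 * lam2"
  using lin_yx_eq_reduced[of 0] by (simp add: uc_def ud_def Wc_def Wd_def)

lemma rho_scaled_coeffs: "\<exists>s::real. (s = 1 \<or> s = -1) \<and> rho * d0 = s * c0 \<and> rho^3 * d1 = s * c1"
proof (cases "lam2 = lam")
  case True
  have "k0 = complex_of_real c0" using k0_mult_lam2 True lam_nonzero by simp
  then have a: "rho * d0 = c0" unfolding k0_def by (simp only: of_real_eq_iff)
  have "k1 = complex_of_real c1" using k1_mult_lam2 True lam_nonzero by simp
  then have b: "rho^3 * d1 = c1" unfolding k1_def by (simp only: of_real_eq_iff)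
  show ?thesis by (intro exI[of _ 1]) (simp add: a b)
next
  case False
  have "(k0 + complex_of_real c0) * (lam2 - lam) = 0"
    using k0_mult_lam2 k0_mult_lam by (simp add: algebra_simps)
  then have "k0 = - complex_of_real c0" using False by (simp add: add_eq_0_iff2)
  moreover have "(k1 + complex_of_real c1) * (lam2 - lam) = 0"
    using k1_mult_lam2 k1_mult_lam by (simp add: algebra_simps)
  then have "k1 = - complex_of_real c1" using False by (simp add: add_eq_0_iff2)
  ultimately have "complex_of_real (rho * d0) = complex_of_real (- c0)"
     "complex_of_real (rho^3 * d1) = complex_of_real (- c1)"
    unfolding k0_def k1_def by simp_all
  then have a: "rho * d0 = - c0" "rho^3 * d1 = - c1" by (simp_all only: of_real_eq_iff)
  show ?thesis by (intro exI[of _ "-1"]) (simp add: a)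
qed

lemma coeffs_scaling: "\<exists>\<kappa>::real. \<kappa> \<noteq> 0 \<and> d0 = \<kappa> * c0 \<and> d1 = \<kappa>^3 * c1"
proof -
  obtain s :: real where s: "s = 1 \<or> s = -1" "rho * d0 = s * c0" "rho^3 * d1 = s * c1"
    using rho_scaled_coeffs by blast
  have r: "rho > 0" by (rule rho_pos)
  have s3: "s^3 = s" using s(1) by auto
  show ?thesis
  proof (intro exI[of _ "s / rho"] conjI)
    show "s / rho \<noteq> 0" using s(1) r by auto
    show "d0 = s / rho * c0" using s(2) r by (simp add: field_simps)
    have e1: "(s / rho)^3 * c1 = s * c1 / rho^3" using s3 by (simp add: power_divide)
    have e2: "d1 = s * c1 / rho^3" using s(3) r by (simp add: field_simps)
    show "d1 = (s / rho)^3 * c1" by (simp only: e1 e2)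
  qed
qed

end

section \<open>Classification\<close>

lemma equivariant_inv:
  assumes "bij \<psi>" "equivariant \<psi>" shows "equivariant (inv \<psi>)"
  unfolding equivariant_def
proof (intro allI impI)
  fix t p assume "(t::complex) \<noteq> 0"
  then have "\<psi> (act t (inv \<psi> p)) = act t p"
    using assms bij_inv_eq_iff unfolding equivariant_def by metis
  then show "inv \<psi> (act t p) = act t (inv \<psi> p)"
    using assms(1) bij_inv_eq_iff by metis
qed

lemma equivalent_rcf_mu_lin_iff_scaling:
  "equivalent_rcf (mu_lin c0 c1) (mu_lin d0 d1) \<longleftrightarrow> (\<exists>\<kappa>::real. \<kappa> \<noteq> 0 \<and> d0 = \<kappa> * c0 \<and> d1 = \<kappa>^3 * c1)"
proof
  assume "equivalent_rcf (mu_lin c0 c1) (mu_lin d0 d1)"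
  then obtain \<psi> where aut: "regular_aut \<psi>" and eqv: "equivariant \<psi>"
    and conj: "mu_lin d0 d1 = \<psi> \<circ> mu_lin c0 c1 \<circ> inv \<psi>"
    unfolding equivalent_rcf_def by blast
  have bij: "bij \<psi>" using aut by (simp add: regular_aut_def)
  interpret conjugacy \<psi> "inv \<psi>" c0 c1 d0 d1
  proof unfold_locales
    show "inv \<psi> (\<psi> p) = p" for p using bij by (simp add: bij_def inv_f_f)
    then show "mu_lin d0 d1 (\<psi> p) = \<psi> (mu_lin c0 c1 p)" for p by (simp add: conj)
  qed (use aut eqv equivariant_inv[OF bij eqv] in \<open>auto simp: regular_aut_def\<close>)
  show "\<exists>\<kappa>::real. \<kappa> \<noteq> 0 \<and> d0 = \<kappa> * c0 \<and> d1 = \<kappa>^3 * c1" by (rule coeffs_scaling)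
qed (use equivalent_rcf_if_scaling in blast)

lemma scaling_iff_cases:
  fixes c0 c1 d0 d1 :: real
  shows "(\<exists>\<kappa>::real. \<kappa> \<noteq> 0 \<and> d0 = \<kappa> * c0 \<and> d1 = \<kappa>^3 * c1) \<longleftrightarrow>
           (c0 = 0 \<and> d0 = 0 \<and> c1 = 0 \<and> d1 = 0) \<or>
           (c0 = 0 \<and> d0 = 0 \<and> c1 * d1 \<noteq> 0) \<or>
           (c1 = 0 \<and> d1 = 0 \<and> c0 * d0 \<noteq> 0) \<or>
           (c0 * d0 * c1 * d1 \<noteq> 0 \<and> (d0 / c0) ^ 3 = d1 / c1)"
    (is "?scaling \<longleftrightarrow> ?C1 \<or> ?C2 \<or> ?C3 \<or> ?C4")
proof
  assume ?scaling
  then obtain \<kappa> :: real where k: "\<kappa> \<noteq> 0" "d0 = \<kappa> * c0" "d1 = \<kappa>^3 * c1" by blast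
  show "?C1 \<or> ?C2 \<or> ?C3 \<or> ?C4"
  proof (cases "c0 = 0"; cases "c1 = 0")
    assume "c0 \<noteq> 0" "c1 \<noteq> 0"
    then have "(d0 / c0) ^ 3 = d1 / c1" using k by (simp add: power_mult_distrib)
    then show ?thesis using k \<open>c0 \<noteq> 0\<close> \<open>c1 \<noteq> 0\<close> by auto
  qed (use k in auto)
next
  assume "?C1 \<or> ?C2 \<or> ?C3 \<or> ?C4"
  then consider ?C1 | ?C2 | ?C3 | ?C4 by blast
  then show ?scaling
  proof cases
    case 1 then show ?thesis by (intro exI[of _ 1]) simp
  next
    case 2
    define \<kappa> where "\<kappa> = root 3 (d1 / c1)"
    have k3: "\<kappa>^3 = d1 / c1" unfolding \<kappa>_def by (rule odd_real_root_pow) simp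
    then have "\<kappa> \<noteq> 0" "d1 = \<kappa>^3 * c1" using 2 by auto
    then show ?thesis using 2 by (intro exI[of _ \<kappa>]) simp
  next
    case 3 then show ?thesis by (intro exI[of _ "d0 / c0"]) simp
  next
    case 4
    then have "d1 = (d0 / c0)^3 * c1" by simp
    then show ?thesis using 4 by (intro exI[of _ "d0 / c0"]) simp
  qed
qed

lemma equivalent_rcf_mu_lin_1_imp_eq:
  "equivalent_rcf (mu_lin 1 a) (mu_lin 1 b) \<Longrightarrow> a = b"
  unfolding equivalent_rcf_mu_lin_iff_scaling by auto

lemma inj_on_mu_lin_1: "inj_on (mu_lin 1) {0<..}"
proof (rule inj_onI)
  fix a b :: real assume "a \<in> {0<..}" "b \<in> {0<..}" "mu_lin 1 a = mu_lin 1 b"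
  then have "fst (snd (snd (mu_lin 1 a (1,1,0,1)))) = fst (snd (snd (mu_lin 1 b (1,1,0,1))))" by simp
  then have "complex_of_real ((1 + a)^2) = complex_of_real ((1 + b)^2)" by (simp add: mu_lin_eq Let_def)
  then show "a = b" using \<open>a \<in> {0<..}\<close> \<open>b \<in> {0<..}\<close> by (simp only: of_real_eq_iff) (simp add: power2_eq_iff)
qed

lemma infinite_family_inequivalent:
  "\<exists>F. infinite F \<and> (\<forall>\<mu>\<in>F. real_circle_form \<mu>) \<and>
       (\<forall>\<mu>1\<in>F. \<forall>\<mu>2\<in>F. \<mu>1 \<noteq> \<mu>2 \<longrightarrow> \<not> equivalent_rcf \<mu>1 \<mu>2)"
proof (intro exI[of _ "mu_lin 1 ` {0<..}"] conjI)
  show "infinite (mu_lin 1 ` {0::real<..})"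
    using finite_imageD[OF _ inj_on_mu_lin_1] infinite_Ioi[of "0::real"] by blast
qed (auto simp: real_circle_form_mu_lin dest: equivalent_rcf_mu_lin_1_imp_eq)

theorem mainTheorem3:
  fixes c0 c1 c0' c1' :: real
  shows "(equivalent_rcf (mu_lin c0 c1) (mu_lin c0' c1') \<longleftrightarrow>
           (c0 = 0 \<and> c0' = 0 \<and> c1 = 0 \<and> c1' = 0) \<or>
           (c0 = 0 \<and> c0' = 0 \<and> c1 * c1' \<noteq> 0) \<or>
           (c1 = 0 \<and> c1' = 0 \<and> c0 * c0' \<noteq> 0) \<or>
           (c0 * c0' * c1 * c1' \<noteq> 0 \<and> (c0' / c0) ^ 3 = c1' / c1))
         \<and> (\<exists>F. infinite F \<and> (\<forall>\<mu>\<in>F. real_circle_form \<mu>) \<and>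
              (\<forall>\<mu>1\<in>F. \<forall>\<mu>2\<in>F. \<mu>1 \<noteq> \<mu>2 \<longrightarrow> \<not> equivalent_rcf \<mu>1 \<mu>2))"
  unfolding equivalent_rcf_mu_lin_iff_scaling scaling_iff_cases
  using infinite_family_inequivalent by blast

end
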